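(* Let $N,d\in\mathbb{N}^+$, $\Sigma\in\mathbb{R}^{d\times d}$ symmetric positive semidefinite, $\mu\in\mathbb{R}^{dN}$, and let $\Gamma\in\mathbb{R}^{N\times N}$ with $\Gamma_{ij}=\exp(-\|e_i-e_j\|_2^\nu/\ell)$, where $e_1,\dots,e_N\in\mathbb{R}^{d_e}$ satisfy $\|e_i\|_2=r$ for all $i$ and $\|e_i-e_j\|_2=f(|i-j|)\ge c|i-j|$ for a positive increasing function $f$ and an absolute constant $c>0$, with $\nu\in[1,2]$ and $0<\ell\le c^\nu$. Fix $t\in(0,T]$, $v_t\in\mathbb{R}^{dN}$, $\alpha_t=e^{-t/2}$, $\sigma_t=\sqrt{1-e^{-t}}$, and $\nabla\log p_t(v_t)=-(\alpha_t^2(\Gamma\otimes\Sigma)+\sigma_t^2I)^{-1}(v_t-\alpha_t\mu)$. For an integer $J<N$ let $\bar\Gamma_{ij}=\Gamma_{ij}\mathbf{1}\{|i-j|<J\}$, and let $s^{(K)}(v_t)$ be the $K$-th iterate, $K=O(\kappa_t\log(1/\epsilon))$, of the gradient descent $$s^{(k+1)}=s^{(k)}-\eta_t\Big(\big(\alpha_t^2(\bar\Gamma\otimes\Sigma)+\sigma_t^2 I\big)s^{(k)}+(v_t-\alpha_t\mu)\Big),\qquad s^{(0)}=0,$$ with a suitable step size $\eta_t$, where $\kappa_t$ is the condition number of $\alpha_t^2(\bar\Gamma\otimes\Sigma)+\sigma_t^2I$. Then for any $\epsilon<\lambda_{\min}(\Gamma)$, choosing $J=O\big((\ell\log(N/(\epsilon\sigma_t)))^{1/\nu}\big)$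 gives $$\big\|s^{(K)}(v_t)-\nabla\log p_t(v_t)\big\|_2\le 2\sigma_t^{-2}\|v_t-\alpha_t\mu\|_2\,\epsilon .$$
   Context: $\otimes$ is the Kronecker product; $\lambda_{\min}$ denotes the smallest eigenvalue; the condition number of a positive definite matrix is the ratio of its largest to smallest eigenvalue. The vectors $e_i$ are time (position) embeddings of a uniform time grid $h_1,\dots,h_N$, and $\Gamma_{ij}=\gamma(h_i,h_j)$ is the temporal covariance of a Gaussian process. *)

theory Defs
  imports "HOL-Analysis.Analysis" "Jordan_Normal_Form.Gauss_Jordan_Elimination" "Jordan_Normal_Form.Char_Poly"
begin

definition vnorm :: "real vec \<Rightarrow> real" where
  "vnorm x = sqrt (\<Sum>i<dim_vec x. (x $ i)^2)"

text \<open>Kronecker product of an N x N matrix G with a d x d matrix S, index (i,a) <-> i*d+a.\<close>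
definition kron :: "real mat \<Rightarrow> real mat \<Rightarrow> real mat" where
  "kron G S = mat (dim_row G * dim_row S) (dim_col G * dim_col S)
     (\<lambda>(p,q). G $$ (p div dim_row S, q div dim_col S) * S $$ (p mod dim_row S, q mod dim_col S))"

definition sym_psd :: "nat \<Rightarrow> real mat \<Rightarrow> bool" where
  "sym_psd n S \<longleftrightarrow> S \<in> carrier_mat n n \<and> transpose_mat S = S \<and>
     (\<forall>x \<in> carrier_vec n. x \<bullet> (S *\<^sub>v x) \<ge> 0)"

definition lambda_min :: "real mat \<Rightarrow> real" where
  "lambda_min A = Min {k. eigenvalue A k}"

definition lambda_max :: "real mat \<Rightarrow> real" where
  "lambda_max A = Max {k. eigenvalue A k}"

definition cond_num :: "real mat \<Rightarrow> real" where
  "cond_num A = lambda_max A / lambda_min A"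

definition minv :: "real mat \<Rightarrow> real mat" where
  "minv A = the (mat_inverse A)"

fun gd_iter :: "real mat \<Rightarrow> real vec \<Rightarrow> real \<Rightarrow> nat \<Rightarrow> real vec" where
  "gd_iter M b eta 0 = 0\<^sub>v (dim_vec b)"
| "gd_iter M b eta (Suc k) =
     gd_iter M b eta k - eta \<cdot>\<^sub>v (M *\<^sub>v gd_iter M b eta k + b)"

definition Gamma_mat :: "nat \<Rightarrow> (nat \<Rightarrow> real vec) \<Rightarrow> real \<Rightarrow> real \<Rightarrow> real mat" where
  "Gamma_mat N e nu l = mat N N (\<lambda>(i,j). exp (- (vnorm (e i - e j) powr nu) / l))"

definition band_trunc :: "nat \<Rightarrow> real mat \<Rightarrow> real mat" where
  "band_trunc J G = mat (dim_row G) (dim_col G)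
     (\<lambda>(i,j). if (if i \<le> j then j - i else i - j) < J then G $$ (i,j) else 0)"

definition alpha_t :: "real \<Rightarrow> real" where "alpha_t t = exp (- t / 2)"
definition sigma_t :: "real \<Rightarrow> real" where "sigma_t t = sqrt (1 - exp (- t))"

definition prec_mat :: "real \<Rightarrow> real mat \<Rightarrow> real mat \<Rightarrow> real mat" where
  "prec_mat t G S = (alpha_t t)^2 \<cdot>\<^sub>m kron G S + (sigma_t t)^2 \<cdot>\<^sub>m 1\<^sub>m (dim_row G * dim_row S)"

definition score :: "real \<Rightarrow> real mat \<Rightarrow> real mat \<Rightarrow> real vec \<Rightarrow> real vec \<Rightarrow> real vec" where
  "score t G S mu v = - (minv (prec_mat t G S) *\<^sub>v (v - alpha_t t \<cdot>\<^sub>v mu))"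

end

theory Submission
  imports Defs
begin

unbundle no inner_syntax
no_notation vec_nth (infixl \<open>$\<close> 90)

text \<open>
  The score is \<open>- A\<^sup>-\<^sup>1 b\<close> for \<open>A = \<alpha>\<^sup>2 (\<Gamma> \<otimes> \<Sigma>) + \<sigma>\<^sup>2 I\<close> and \<open>b = v - \<alpha> \<mu>\<close>, while gradient descent
  solves the banded system \<open>M s = - b\<close> with \<open>M = \<alpha>\<^sup>2 (\<Gamma>' \<otimes> \<Sigma>) + \<sigma>\<^sup>2 I\<close>.
  Since \<open>\<Gamma>\<^sub>i\<^sub>j \<le> exp (- (c |i - j|)\<^sup>\<nu> / l)\<close>, every entry outside the band is at most \<open>(\<epsilon> \<sigma> / N)\<^sup>2\<close>
  once \<open>J \<ge> (2 / c) (l log (N / (\<epsilon> \<sigma>)))\<^sup>1\<^sup>/\<^sup>\<nu>\<close>, so \<open>\<parallel>\<Gamma> - \<Gamma>'\<parallel> \<le> \<epsilon>\<^sup>2 \<sigma>\<^sup>2 / N \<le> \<epsilon> \<lambda>\<^sub>m\<^sub>i\<^sub>n(\<Gamma>)\<close>.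
  In particular \<open>\<Gamma>'\<close> is still positive semidefinite; Kronecker products of positive semidefinite
  matrices are positive semidefinite, hence \<open>A, M \<ge> \<sigma>\<^sup>2 I\<close>.
  Put \<open>u = \<alpha>\<^sup>2 (I \<otimes> \<Sigma>) A\<^sup>-\<^sup>1 b\<close>. Then \<open>M (A\<^sup>-\<^sup>1 b - M\<^sup>-\<^sup>1 b) = - ((\<Gamma> - \<Gamma>') \<otimes> I) u\<close>, and
  \<open>(\<Gamma> \<otimes> I) u = b - \<sigma>\<^sup>2 A\<^sup>-\<^sup>1 b\<close> has norm at most \<open>\<parallel>b\<parallel>\<close>, so \<open>\<lambda>\<^sub>m\<^sub>i\<^sub>n(\<Gamma>) \<parallel>u\<parallel> \<le> \<parallel>b\<parallel>\<close> and
  \<open>\<parallel>A\<^sup>-\<^sup>1 b - M\<^sup>-\<^sup>1 b\<parallel> \<le> \<epsilon> \<parallel>b\<parallel> / \<sigma>\<^sup>2\<close>.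
  With step size \<open>1 / \<lambda>\<^sub>m\<^sub>a\<^sub>x(M)\<close> the error of gradient descent contracts by \<open>1 - 1 / \<kappa>\<close> per step,
  so after \<open>\<kappa> log (1 / \<epsilon>)\<close> steps it is at most \<open>\<epsilon> \<parallel>M\<^sup>-\<^sup>1 b\<parallel> \<le> \<epsilon> \<parallel>b\<parallel> / \<sigma>\<^sup>2\<close>.
\<close>

section \<open>Euclidean norm of real vectors\<close>

lemma scalar_prod_self_nonneg: "0 \<le> (x :: real vec) \<bullet> x"
  unfolding scalar_prod_def by (auto intro: sum_nonneg)

lemma scalar_prod_self_eq_0_iff:
  assumes "x \<in> carrier_vec n"
  shows "(x :: real vec) \<bullet> x = 0 \<longleftrightarrow> x = 0\<^sub>v n"
proof
  assume "x \<bullet> x = 0"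
  then have "\<forall>i\<in>{0..<n}. x $ i * x $ i = 0"
    using assms sum_nonneg_eq_0_iff[of "{0..<n}" "\<lambda>i. x $ i * x $ i"]
    unfolding scalar_prod_def by auto
  then show "x = 0\<^sub>v n" using assms by (auto intro!: eq_vecI)
qed (use assms in simp)

lemma vnorm_eq_sqrt_scalar_prod: "vnorm x = sqrt (x \<bullet> x)"
  unfolding vnorm_def scalar_prod_def by (simp add: atLeast0LessThan power2_eq_square)

lemma vnorm_nonneg: "0 \<le> vnorm x"
  by (simp add: vnorm_eq_sqrt_scalar_prod scalar_prod_self_nonneg)

lemma vnorm_power2: "(vnorm x)\<^sup>2 = x \<bullet> x"
  by (simp add: vnorm_eq_sqrt_scalar_prod scalar_prod_self_nonneg)

lemma vnorm_le_iff_scalar_prod_le: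
  assumes "0 \<le> c"
  shows "vnorm x \<le> c \<longleftrightarrow> x \<bullet> x \<le> c\<^sup>2"
  using assms by (auto simp: vnorm_eq_sqrt_scalar_prod intro: real_le_lsqrt dest: sqrt_le_D)

lemma vnorm_le_mult_iff_scalar_prod_le:
  assumes "0 \<le> c"
  shows "vnorm x \<le> c * vnorm y \<longleftrightarrow> x \<bullet> x \<le> c\<^sup>2 * (y \<bullet> y)"
  using assms vnorm_le_iff_scalar_prod_le[of "c * vnorm y" x] vnorm_nonneg[of y]
  by (simp add: power_mult_distrib vnorm_power2)

lemma vnorm_uminus: "vnorm (- x) = vnorm x"
  by (simp add: vnorm_def)

lemma vnorm_minus_commute:
  assumes "x \<in> carrier_vec n" "y \<in> carrier_vec n"
  shows "vnorm (x - y) = vnorm (y - x)"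
proof -
  have "x - y = - (y - x)" using assms by (intro eq_vecI) auto
  then show ?thesis by (simp add: vnorm_uminus)
qed

lemma abs_scalar_prod_le_vnorm:
  assumes "x \<in> carrier_vec n" "y \<in> carrier_vec n"
  shows "\<bar>x \<bullet> y\<bar> \<le> vnorm x * vnorm y"
proof -
  have "\<bar>x \<bullet> y\<bar> \<le> (\<Sum>i<n. \<bar>x $ i\<bar> * \<bar>y $ i\<bar>)"
    using assms sum_abs[of "\<lambda>i. x $ i * y $ i" "{..<n}"]
    by (simp add: scalar_prod_def atLeast0LessThan abs_mult)
  also have "\<dots> \<le> L2_set (\<lambda>i. x $ i) {..<n} * L2_set (\<lambda>i. y $ i) {..<n}"
    by (rule L2_set_mult_ineq)
  also have "\<dots> = vnorm x * vnorm y"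
    using assms by (simp add: vnorm_def L2_set_def)
  finally show ?thesis .
qed

lemma scalar_prod_add_smult_self:
  fixes x u :: "real vec"
  assumes "x \<in> carrier_vec n" "u \<in> carrier_vec n"
  shows "(x + t \<cdot>\<^sub>v u) \<bullet> (x + t \<cdot>\<^sub>v u) = x \<bullet> x + 2 * t * (u \<bullet> x) + t\<^sup>2 * (u \<bullet> u)"
  using assms
  by (simp add: add_scalar_prod_distrib[of _ n] scalar_prod_add_distrib[of _ n]
      comm_scalar_prod[of x n u] power2_eq_square algebra_simps)

lemma vnorm_add_le:
  assumes "x \<in> carrier_vec n" "y \<in> carrier_vec n"
  shows "vnorm (x + y) \<le> vnorm x + vnorm y"
proof -
  have "(x + y) \<bullet> (x + y) = x \<bullet> x + 2 * (y \<bullet> x) + y \<bullet> y"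
    using scalar_prod_add_smult_self[OF assms, of 1] by simp
  also have "\<dots> \<le> (vnorm x + vnorm y)\<^sup>2"
    using abs_scalar_prod_le_vnorm[OF assms(2,1)]
    by (simp add: power2_sum vnorm_power2 algebra_simps)
  finally show ?thesis
    by (simp add: vnorm_le_iff_scalar_prod_le vnorm_nonneg)
qed

lemma vnorm_add_le_via:
  assumes "x \<in> carrier_vec n" "y \<in> carrier_vec n" "z \<in> carrier_vec n"
  shows "vnorm (x + y) \<le> vnorm (x + z) + vnorm (y - z)"
proof -
  have "x + y = (x + z) + (y - z)" using assms by (intro eq_vecI) auto
  then show ?thesis using vnorm_add_le[of "x + z" n "y - z"] assms by simp
qed

section \<open>Quadratic forms and extreme eigenvalues of symmetric matrices\<close>

lemma smult_mat_mult_vec: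
  fixes A :: "'a :: comm_ring_1 mat"
  assumes "dim_col A = dim_vec v"
  shows "(k \<cdot>\<^sub>m A) *\<^sub>v v = k \<cdot>\<^sub>v (A *\<^sub>v v)"
  using assms
  by (intro eq_vecI) (auto simp: mult_mat_vec_def scalar_prod_def sum_distrib_left algebra_simps)

lemma symmetric_mat_entry:
  assumes "A \<in> carrier_mat n n" "transpose_mat A = A" "i < n" "j < n"
  shows "A $$ (j, i) = A $$ (i, j)"
  using assms by (metis index_transpose_mat(1) carrier_matD)

lemma quadratic_form_expand:
  assumes "A \<in> carrier_mat n n" "x \<in> carrier_vec n" "y \<in> carrier_vec n"
  shows "x \<bullet> (A *\<^sub>v y) = (\<Sum>i<n. \<Sum>j<n. x $ i * A $$ (i, j) * y $ j)"
  using assms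
  by (auto simp: scalar_prod_def mult_mat_vec_def sum_distrib_left atLeast0LessThan algebra_simps
      intro!: sum.cong)

lemma symmetric_scalar_prod_swap:
  fixes A :: "real mat"
  assumes A: "A \<in> carrier_mat n n" "transpose_mat A = A"
    and x: "x \<in> carrier_vec n" and y: "y \<in> carrier_vec n"
  shows "x \<bullet> (A *\<^sub>v y) = y \<bullet> (A *\<^sub>v x)"
proof -
  have "x \<bullet> (A *\<^sub>v y) = (A *\<^sub>v x) \<bullet> y"
    using transpose_vec_mult_scalar[OF A(1) y x] A(2) by simp
  also have "\<dots> = y \<bullet> (A *\<^sub>v x)"
    using A x y by (intro comm_scalar_prod[of _ n]) auto
  finally show ?thesis .
qed

lemma quadratic_form_add_smult:
  fixes A :: "real mat"
  assumes A: "A \<in> carrier_mat n n" "transpose_mat A = A"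
    and x: "x \<in> carrier_vec n" and u: "u \<in> carrier_vec n"
  shows "(x + t \<cdot>\<^sub>v u) \<bullet> (A *\<^sub>v (x + t \<cdot>\<^sub>v u)) =
    x \<bullet> (A *\<^sub>v x) + 2 * t * (u \<bullet> (A *\<^sub>v x)) + t\<^sup>2 * (u \<bullet> (A *\<^sub>v u))"
proof -
  have "A *\<^sub>v (x + t \<cdot>\<^sub>v u) = A *\<^sub>v x + t \<cdot>\<^sub>v (A *\<^sub>v u)"
    using A x u by (simp add: mult_add_distrib_mat_vec mult_mat_vec)
  then show ?thesis
    using A x u symmetric_scalar_prod_swap[OF A x u]
    by (simp add: add_scalar_prod_distrib[of _ n] scalar_prod_add_distrib[of _ n]
        power2_eq_square algebra_simps)
qed

lemma linear_coeff_eq_0_if_quadratic_nonneg: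
  fixes a c :: real
  assumes "\<And>s. 2 * s * a \<le> s\<^sup>2 * c"
  shows "a = 0"
proof (rule ccontr)
  assume "a \<noteq> 0"
  define d where "d = \<bar>c\<bar> + 1"
  have d: "0 < d" "c < 2 * d" by (auto simp: d_def)
  define s where "s = a / d"
  have "s\<^sup>2 * c - 2 * s * a = a\<^sup>2 * (c - 2 * d) / d\<^sup>2"
    using d by (simp add: s_def field_simps power2_eq_square)
  also have "\<dots> < 0"
    using \<open>a \<noteq> 0\<close> d by (intro divide_neg_pos mult_pos_neg) auto
  finally show False using assms[of s] by simp
qed

lemma mult_vec_eq_0_if_psd_quadratic_form_eq_0:
  fixes A :: "real mat"
  assumes A: "A \<in> carrier_mat n n" "transpose_mat A = A"
    and psd: "\<And>y. y \<in> carrier_vec n \<Longrightarrow> 0 \<le> y \<bullet> (A *\<^sub>v y)"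
    and x: "x \<in> carrier_vec n" and x0: "x \<bullet> (A *\<^sub>v x) = 0"
  shows "A *\<^sub>v x = 0\<^sub>v n"
proof -
  define u where "u = A *\<^sub>v x"
  have u: "u \<in> carrier_vec n" using A x by (simp add: u_def)
  have "2 * s * (u \<bullet> u) \<le> s\<^sup>2 * (u \<bullet> (A *\<^sub>v u))" for s
    using psd[of "x + (- s) \<cdot>\<^sub>v u"] quadratic_form_add_smult[OF A x u, of "- s"] x u x0
    by (simp add: u_def)
  then have "u \<bullet> u = 0" by (rule linear_coeff_eq_0_if_quadratic_nonneg)
  then show ?thesis using scalar_prod_self_eq_0_iff[OF u] by (simp add: u_def)
qed

lemma mult_vec_eq_if_quadratic_form_min:
  fixes A :: "real mat"
  assumes A: "A \<in> carrier_mat n n" "transpose_mat A = A"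
    and lower: "\<And>y. y \<in> carrier_vec n \<Longrightarrow> m * (y \<bullet> y) \<le> y \<bullet> (A *\<^sub>v y)"
    and v: "v \<in> carrier_vec n" "v \<bullet> (A *\<^sub>v v) = m * (v \<bullet> v)"
  shows "A *\<^sub>v v = m \<cdot>\<^sub>v v"
proof -
  \<comment> \<open>\<open>v\<close> is a zero of the positive semidefinite form of \<open>A - m I\<close>, hence in its kernel.\<close>
  define B where "B = A - m \<cdot>\<^sub>m 1\<^sub>m n"
  have B: "B \<in> carrier_mat n n" "transpose_mat B = B"
    using A by (auto simp: B_def symmetric_mat_entry[OF A] intro!: eq_matI)
  have B_mult: "B *\<^sub>v y = A *\<^sub>v y - m \<cdot>\<^sub>v y" if "y \<in> carrier_vec n" for y
    using that A by (simp add: B_def minus_mult_distrib_mat_vec[of _ n n] smult_mat_mult_vec)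
  have B_form: "y \<bullet> (B *\<^sub>v y) = y \<bullet> (A *\<^sub>v y) - m * (y \<bullet> y)" if "y \<in> carrier_vec n" for y
    using that A by (simp add: B_mult scalar_prod_minus_distrib[of _ n])
  have "B *\<^sub>v v = 0\<^sub>v n"
    using mult_vec_eq_0_if_psd_quadratic_form_eq_0[OF B _ v(1)] B_form lower v by simp
  then have diff: "A *\<^sub>v v - m \<cdot>\<^sub>v v = 0\<^sub>v n" using B_mult[OF v(1)] by simp
  show ?thesis
  proof (rule eq_vecI)
    fix i assume "i < dim_vec (m \<cdot>\<^sub>v v)"
    then show "(A *\<^sub>v v) $ i = (m \<cdot>\<^sub>v v) $ i"
      using arg_cong[OF diff, of "\<lambda>w. w $ i"] A v(1) by simp
  qed (use A v in simp)
qed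

lemma continuous_on_coordinate: "continuous_on S (\<lambda>x :: nat \<Rightarrow> real. x i)"
  by (rule continuous_on_subset[OF continuous_on_product_coordinates]) auto

lemma compact_coordinate_sphere:
  "compact (Pi UNIV (\<lambda>i. if i < n then {-1..1} else {0}) \<inter> {x :: nat \<Rightarrow> real. (\<Sum>i<n. (x i)\<^sup>2) = 1})"
proof (rule compact_Int_closed)
  have "compactin (product_topology (\<lambda>i. euclideanreal) UNIV)
          (PiE UNIV (\<lambda>i. if i < n then {-1..1::real} else {0}))"
    by (subst compactin_PiE) auto
  then show "compact (Pi UNIV (\<lambda>i. if i < n then {-1..1::real} else {0}))"
    by (simp add: euclidean_product_topology PiE_UNIV_domain)
  show "closed {x :: nat \<Rightarrow> real. (\<Sum>i<n. (x i)\<^sup>2) = 1}"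
    by (intro closed_Collect_eq continuous_intros continuous_on_coordinate)
qed

lemma quadratic_form_attains_min_on_sphere:
  fixes A :: "real mat"
  assumes A: "A \<in> carrier_mat n n" and n: "0 < n"
  obtains v where "v \<in> carrier_vec n" "v \<bullet> v = 1"
    "\<And>y. y \<in> carrier_vec n \<Longrightarrow> y \<bullet> y = 1 \<Longrightarrow> v \<bullet> (A *\<^sub>v v) \<le> y \<bullet> (A *\<^sub>v y)"
proof -
  define Q where "Q = (\<lambda>x :: nat \<Rightarrow> real. \<Sum>i<n. \<Sum>j<n. x i * A $$ (i, j) * x j)"
  define T where "T = Pi UNIV (\<lambda>i. if i < n then {-1..1} else {0}) \<inter> {x :: nat \<Rightarrow> real. (\<Sum>i<n. (x i)\<^sup>2) = 1}"
  define embed where "embed = (\<lambda>y i. if i < n then y $ i else 0 :: real)"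
  have embed_T: "embed y \<in> T" if y: "y \<in> carrier_vec n" "y \<bullet> y = 1" for y
  proof -
    have sq: "(\<Sum>i<n. (y $ i)\<^sup>2) = 1"
      using y by (simp add: scalar_prod_def atLeast0LessThan power2_eq_square)
    have "(y $ i)\<^sup>2 \<le> 1\<^sup>2" if "i < n" for i
      using that sq member_le_sum[of i "{..<n}" "\<lambda>i. (y $ i)\<^sup>2"] by simp
    then have "\<bar>y $ i\<bar> \<le> 1" if "i < n" for i
      using that abs_le_square_iff[of "y $ i" 1] by simp
    then show ?thesis using sq by (auto simp: T_def embed_def abs_le_iff)
  qed
  have Q_embed: "Q (embed y) = y \<bullet> (A *\<^sub>v y)" if "y \<in> carrier_vec n" for y
    using quadratic_form_expand[OF A that that] by (simp add: Q_def embed_def)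
  have "T \<noteq> {}" using embed_T[of "unit_vec n 0"] n by auto
  moreover have "continuous_on T Q" unfolding Q_def by (intro continuous_intros continuous_on_coordinate)
  ultimately obtain x where x: "x \<in> T" and xmin: "\<And>z. z \<in> T \<Longrightarrow> Q x \<le> Q z"
    using continuous_attains_inf[OF compact_coordinate_sphere[of n, folded T_def]] by blast
  define v where "v = vec n x"
  have x_box: "x i \<in> (if i < n then {-1..1} else {0})" for i
    using x unfolding T_def by (intro Pi_mem[of x UNIV]) auto
  have "x i = 0" if "\<not> i < n" for i using that x_box[of i] by simp
  then have "embed v = x" by (auto simp: embed_def v_def)
  moreover have "v \<bullet> v = 1"
    using x by (simp add: v_def T_def scalar_prod_def atLeast0LessThan power2_eq_square)
  moreover have "v \<bullet> (A *\<^sub>v v) \<le> y \<bullet> (A *\<^sub>v y)" if "y \<in> carrier_vec n" "y \<bullet> y = 1" for y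
    using xmin[OF embed_T[OF that]] Q_embed[OF that(1)] Q_embed[of v] \<open>embed v = x\<close>
    by (simp add: v_def)
  ultimately show ?thesis using that[of v] by (simp add: v_def)
qed

lemma rayleigh_min_eigenvalue:
  fixes A :: "real mat"
  assumes A: "A \<in> carrier_mat n n" "transpose_mat A = A" and n: "0 < n"
  obtains m where "eigenvalue A m" "\<And>y. y \<in> carrier_vec n \<Longrightarrow> m * (y \<bullet> y) \<le> y \<bullet> (A *\<^sub>v y)"
proof -
  obtain v where v: "v \<in> carrier_vec n" "v \<bullet> v = 1"
    and vmin: "\<And>y. y \<in> carrier_vec n \<Longrightarrow> y \<bullet> y = 1 \<Longrightarrow> v \<bullet> (A *\<^sub>v v) \<le> y \<bullet> (A *\<^sub>v y)"
    using quadratic_form_attains_min_on_sphere[OF A(1) n] by blast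
  define m where "m = v \<bullet> (A *\<^sub>v v)"
  have lower: "m * (y \<bullet> y) \<le> y \<bullet> (A *\<^sub>v y)" if y: "y \<in> carrier_vec n" for y
  proof (cases "y \<bullet> y = 0")
    case True
    then show ?thesis using y A scalar_prod_self_eq_0_iff[OF y] by simp
  next
    case False
    define r where "r = sqrt (y \<bullet> y)"
    have yy: "0 < y \<bullet> y" using False scalar_prod_self_nonneg[of y] by simp
    then have r: "0 < r" "r\<^sup>2 = y \<bullet> y" by (auto simp: r_def)
    have "m \<le> ((1 / r) \<cdot>\<^sub>v y) \<bullet> (A *\<^sub>v ((1 / r) \<cdot>\<^sub>v y))"
      unfolding m_def using y A r by (intro vmin) (auto simp: mult_mat_vec power2_eq_square)
    also have "\<dots> = y \<bullet> (A *\<^sub>v y) / r\<^sup>2"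
      using y A by (simp add: mult_mat_vec power2_eq_square)
    finally show ?thesis using r yy by (simp add: pos_le_divide_eq)
  qed
  have "A *\<^sub>v v = m \<cdot>\<^sub>v v"
    using v by (intro mult_vec_eq_if_quadratic_form_min[OF A lower]) (auto simp: m_def)
  moreover have "v \<noteq> 0\<^sub>v n" using v by auto
  ultimately have "eigenvalue A m"
    using A v by (auto simp: eigenvalue_def eigenvector_def)
  then show ?thesis using that lower by blast
qed

lemma eigenvalue_quadratic_form:
  fixes A :: "real mat"
  assumes A: "A \<in> carrier_mat n n" and k: "eigenvalue A k"
  obtains v where "v \<in> carrier_vec n" "0 < v \<bullet> v" "v \<bullet> (A *\<^sub>v v) = k * (v \<bullet> v)"
proof -
  obtain v where v: "v \<in> carrier_vec n" "v \<noteq> 0\<^sub>v n" "A *\<^sub>v v = k \<cdot>\<^sub>v v"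
    using A k unfolding eigenvalue_def eigenvector_def by auto
  have "0 < v \<bullet> v"
    using scalar_prod_self_eq_0_iff[OF v(1)] scalar_prod_self_nonneg[of v] v(2) by linarith
  then show ?thesis using that v by simp
qed

lemma eigenvalue_uminus_mat:
  fixes A :: "real mat"
  assumes A: "A \<in> carrier_mat n n" and k: "eigenvalue (- A) k"
  shows "eigenvalue A (- k)"
proof -
  obtain v where v: "v \<in> carrier_vec n" "v \<noteq> 0\<^sub>v n" "- (A *\<^sub>v v) = k \<cdot>\<^sub>v v"
    using A k unfolding eigenvalue_def eigenvector_def by auto
  have "A *\<^sub>v v = (- k) \<cdot>\<^sub>v v"
  proof (rule eq_vecI)
    fix i assume "i < dim_vec ((- k) \<cdot>\<^sub>v v)"
    then show "(A *\<^sub>v v) $ i = ((- k) \<cdot>\<^sub>v v) $ i"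
      using arg_cong[OF v(3), of "\<lambda>w. w $ i"] A v(1) by (simp add: minus_equation_iff)
  qed (use A v in simp)
  then show ?thesis using A v by (auto simp: eigenvalue_def eigenvector_def)
qed

lemma finite_eigenvalues:
  fixes A :: "real mat"
  assumes "A \<in> carrier_mat n n"
  shows "finite {k. eigenvalue A k}"
proof -
  have "char_poly A \<noteq> 0" using degree_monic_char_poly[OF assms] by auto
  then show ?thesis
    using poly_roots_finite[of "char_poly A"] eigenvalue_root_char_poly[OF assms] by simp
qed

lemma lambda_min_spec:
  fixes A :: "real mat"
  assumes A: "A \<in> carrier_mat n n" "transpose_mat A = A" and n: "0 < n"
  shows "eigenvalue A (lambda_min A)"
    and "\<And>y. y \<in> carrier_vec n \<Longrightarrow> lambda_min A * (y \<bullet> y) \<le> y \<bullet> (A *\<^sub>v y)"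
proof -
  obtain m where m: "eigenvalue A m" "\<And>y. y \<in> carrier_vec n \<Longrightarrow> m * (y \<bullet> y) \<le> y \<bullet> (A *\<^sub>v y)"
    using rayleigh_min_eigenvalue[OF A n] by blast
  have "m \<le> k" if k: "eigenvalue A k" for k
  proof -
    obtain v where "v \<in> carrier_vec n" "0 < v \<bullet> v" "v \<bullet> (A *\<^sub>v v) = k * (v \<bullet> v)"
      using eigenvalue_quadratic_form[OF A(1) k] .
    then show ?thesis using m(2)[of v] by simp
  qed
  then have "lambda_min A = m"
    unfolding lambda_min_def using finite_eigenvalues[OF A(1)] m(1) by (intro Min_eqI) auto
  then show "eigenvalue A (lambda_min A)" "\<And>y. y \<in> carrier_vec n \<Longrightarrow> lambda_min A * (y \<bullet> y) \<le> y \<bullet> (A *\<^sub>v y)"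
    using m by auto
qed

lemma lambda_max_spec:
  fixes A :: "real mat"
  assumes A: "A \<in> carrier_mat n n" "transpose_mat A = A" and n: "0 < n"
  shows "eigenvalue A (lambda_max A)"
    and "\<And>y. y \<in> carrier_vec n \<Longrightarrow> y \<bullet> (A *\<^sub>v y) \<le> lambda_max A * (y \<bullet> y)"
proof -
  have "- A \<in> carrier_mat n n" "transpose_mat (- A) = - A"
    using A by (auto simp: symmetric_mat_entry[OF A] intro!: eq_matI)
  then obtain m where m: "eigenvalue (- A) m"
    and lower: "\<And>y. y \<in> carrier_vec n \<Longrightarrow> m * (y \<bullet> y) \<le> y \<bullet> ((- A) *\<^sub>v y)"
    using rayleigh_min_eigenvalue[OF _ _ n] by blast
  have upper: "y \<bullet> (A *\<^sub>v y) \<le> - m * (y \<bullet> y)" if "y \<in> carrier_vec n" for y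
    using lower[OF that] that A by simp
  have "k \<le> - m" if k: "eigenvalue A k" for k
  proof -
    obtain v where "v \<in> carrier_vec n" "0 < v \<bullet> v" "v \<bullet> (A *\<^sub>v v) = k * (v \<bullet> v)"
      using eigenvalue_quadratic_form[OF A(1) k] .
    then show ?thesis using upper[of v] mult_le_cancel_right_pos[of "v \<bullet> v" k "- m"] by simp
  qed
  then have "lambda_max A = - m"
    unfolding lambda_max_def using finite_eigenvalues[OF A(1)] eigenvalue_uminus_mat[OF A(1) m]
    by (intro Max_eqI) auto
  then show "eigenvalue A (lambda_max A)" "\<And>y. y \<in> carrier_vec n \<Longrightarrow> y \<bullet> (A *\<^sub>v y) \<le> lambda_max A * (y \<bullet> y)"
    using eigenvalue_uminus_mat[OF A(1) m] upper by auto
qed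

lemma lambda_min_ge:
  fixes A :: "real mat"
  assumes A: "A \<in> carrier_mat n n" "transpose_mat A = A" and n: "0 < n"
    and lower: "\<And>y. y \<in> carrier_vec n \<Longrightarrow> c * (y \<bullet> y) \<le> y \<bullet> (A *\<^sub>v y)"
  shows "c \<le> lambda_min A"
proof -
  obtain v where v: "v \<in> carrier_vec n" "0 < v \<bullet> v" "v \<bullet> (A *\<^sub>v v) = lambda_min A * (v \<bullet> v)"
    using eigenvalue_quadratic_form[OF A(1) lambda_min_spec(1)[OF A n]] .
  then show ?thesis using lower[OF v(1)] by simp
qed

lemma lambda_min_le_lambda_max:
  fixes A :: "real mat"
  assumes A: "A \<in> carrier_mat n n" "transpose_mat A = A" and n: "0 < n"
  shows "lambda_min A \<le> lambda_max A"
proof -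
  obtain v where v: "v \<in> carrier_vec n" "0 < v \<bullet> v" "v \<bullet> (A *\<^sub>v v) = lambda_max A * (v \<bullet> v)"
    using eigenvalue_quadratic_form[OF A(1) lambda_max_spec(1)[OF A n]] .
  then show ?thesis using lambda_min_spec(2)[OF A n v(1)] by simp
qed

lemma lambda_min_le_diag:
  fixes A :: "real mat"
  assumes A: "A \<in> carrier_mat n n" "transpose_mat A = A" and i: "i < n"
  shows "lambda_min A \<le> A $$ (i, i)"
  using lambda_min_spec(2)[OF A _, of "unit_vec n i"] A i by simp

lemma psd_if_eigenvalues_nonneg:
  fixes A :: "real mat"
  assumes A: "A \<in> carrier_mat n n" "transpose_mat A = A"
    and nonneg: "\<And>k. eigenvalue A k \<Longrightarrow> 0 \<le> k" and y: "y \<in> carrier_vec n"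
  shows "0 \<le> y \<bullet> (A *\<^sub>v y)"
proof (cases "n = 0")
  case True
  then show ?thesis using y by (simp add: scalar_prod_def)
next
  case False
  then have "0 \<le> lambda_min A * (y \<bullet> y)"
    using nonneg[OF lambda_min_spec(1)[OF A]] scalar_prod_self_nonneg[of y] by simp
  also have "\<dots> \<le> y \<bullet> (A *\<^sub>v y)" using lambda_min_spec(2)[OF A _ y] False by simp
  finally show ?thesis .
qed

lemma sym_psd_if_quadratic_form_ge:
  fixes A :: "real mat"
  assumes "A \<in> carrier_mat n n" "transpose_mat A = A" "0 \<le> m"
    and lower: "\<And>y. y \<in> carrier_vec n \<Longrightarrow> m * (y \<bullet> y) \<le> y \<bullet> (A *\<^sub>v y)"
  shows "sym_psd n A"
proof -
  have "0 \<le> y \<bullet> (A *\<^sub>v y)" if "y \<in> carrier_vec n" for y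
    using lower[OF that] mult_nonneg_nonneg[OF \<open>0 \<le> m\<close> scalar_prod_self_nonneg[of y]] by linarith
  then show ?thesis using assms by (simp add: sym_psd_def)
qed

lemma sym_psd_of_residual_le:
  fixes G H :: "real mat"
  assumes G: "G \<in> carrier_mat N N"
    and G_lower: "\<And>v. v \<in> carrier_vec N \<Longrightarrow> m * (v \<bullet> v) \<le> v \<bullet> (G *\<^sub>v v)"
    and H: "H \<in> carrier_mat N N" "transpose_mat H = H"
    and residual: "\<And>v. v \<in> carrier_vec N \<Longrightarrow> vnorm ((G - H) *\<^sub>v v) \<le> \<theta> * vnorm v"
    and \<theta>m: "\<theta> \<le> m"
  shows "sym_psd N H"
proof -
  have "0 \<le> v \<bullet> (H *\<^sub>v v)" if v: "v \<in> carrier_vec N" for v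
  proof -
    have Dv: "(G - H) *\<^sub>v v \<in> carrier_vec N" using minus_carrier_mat[OF H(1), of G] v by simp
    have "v \<bullet> (H *\<^sub>v v) = v \<bullet> (G *\<^sub>v v) - v \<bullet> ((G - H) *\<^sub>v v)"
      using G H v by (simp add: minus_mult_distrib_mat_vec[of _ N N] scalar_prod_minus_distrib[of _ N])
    moreover have "v \<bullet> ((G - H) *\<^sub>v v) \<le> vnorm v * (\<theta> * vnorm v)"
      using abs_scalar_prod_le_vnorm[OF v Dv] residual[OF v] vnorm_nonneg[of v]
      by (meson abs_le_D1 mult_left_mono order_trans)
    moreover have "vnorm v * (\<theta> * vnorm v) \<le> m * (v \<bullet> v)"
      using mult_right_mono[OF \<theta>m, of "vnorm v * vnorm v"] vnorm_nonneg[of v]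
      by (simp add: vnorm_power2[symmetric] power2_eq_square mult_ac)
    ultimately show ?thesis using G_lower[OF v] by linarith
  qed
  then show ?thesis using H by (simp add: sym_psd_def)
qed

lemma minv_mult_vec:
  fixes A :: "real mat"
  assumes A: "A \<in> carrier_mat n n" and m: "0 < m"
    and lower: "\<And>y. y \<in> carrier_vec n \<Longrightarrow> m * (y \<bullet> y) \<le> y \<bullet> (A *\<^sub>v y)"
    and b: "b \<in> carrier_vec n"
  shows "minv A *\<^sub>v b \<in> carrier_vec n" "A *\<^sub>v (minv A *\<^sub>v b) = b"
proof -
  have "y = 0\<^sub>v n" if "y \<in> carrier_vec n" "A *\<^sub>v y = 0\<^sub>v n" for y
    using lower[OF that(1)] that m scalar_prod_self_nonneg[of y] scalar_prod_self_eq_0_iff[OF that(1)]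
    by (simp add: mult_le_0_iff)
  then have "det A \<noteq> 0" using det_0_iff_vec_prod_zero[OF A] by blast
  then have "A \<in> Units (ring_mat TYPE(real) n undefined)" by (rule det_non_zero_imp_unit[OF A])
  then obtain B where B: "mat_inverse A = Some B"
    using mat_inverse(1)[OF A, of undefined] by (cases "mat_inverse A") auto
  then have "A * B = 1\<^sub>m n" "B \<in> carrier_mat n n" "minv A = B"
    using mat_inverse(2)[OF A B] by (auto simp: minv_def)
  then show "minv A *\<^sub>v b \<in> carrier_vec n" "A *\<^sub>v (minv A *\<^sub>v b) = b"
    using A b by (auto simp flip: assoc_mult_mat_vec)
qed

lemma vnorm_mult_le_if_abs_quadratic_form_le:
  fixes B :: "real mat"
  assumes B: "B \<in> carrier_mat n n" "transpose_mat B = B" and q: "0 \<le> q"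
    and bound: "\<And>y. y \<in> carrier_vec n \<Longrightarrow> \<bar>y \<bullet> (B *\<^sub>v y)\<bar> \<le> q * (y \<bullet> y)"
    and x: "x \<in> carrier_vec n"
  shows "vnorm (B *\<^sub>v x) \<le> q * vnorm x"
proof -
  define u where "u = B *\<^sub>v x"
  have u: "u \<in> carrier_vec n" using B x by (simp add: u_def)
  define a where "a = u \<bullet> u"
  define b where "b = x \<bullet> x"
  \<comment> \<open>Polarisation: \<open>4 s \<parallel>B x\<parallel>\<^sup>2\<close> is the difference of the forms of \<open>B\<close> at \<open>x \<plusminus> s B x\<close>.\<close>
  have key: "2 * s * a \<le> q * (b + s\<^sup>2 * a)" for s
  proof -
    have "4 * s * a = (x + s \<cdot>\<^sub>v u) \<bullet> (B *\<^sub>v (x + s \<cdot>\<^sub>v u))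
                      - (x + (- s) \<cdot>\<^sub>v u) \<bullet> (B *\<^sub>v (x + (- s) \<cdot>\<^sub>v u))"
      using quadratic_form_add_smult[OF B x u, of s] quadratic_form_add_smult[OF B x u, of "- s"]
      by (simp add: a_def u_def)
    also have "\<dots> \<le> q * ((x + s \<cdot>\<^sub>v u) \<bullet> (x + s \<cdot>\<^sub>v u)) + q * ((x + (- s) \<cdot>\<^sub>v u) \<bullet> (x + (- s) \<cdot>\<^sub>v u))"
      using bound[of "x + s \<cdot>\<^sub>v u"] bound[of "x + (- s) \<cdot>\<^sub>v u"] x u by (auto simp: abs_le_iff)
    also have "\<dots> = q * (2 * b + 2 * s\<^sup>2 * a)"
      unfolding scalar_prod_add_smult_self[OF x u] by (simp add: a_def b_def algebra_simps)
    finally show ?thesis by (simp add: algebra_simps)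
  qed
  have "a \<le> q\<^sup>2 * b"
  proof (cases "q = 0")
    case True
    then show ?thesis using key[of 1] scalar_prod_self_nonneg[of u] by (simp add: a_def)
  next
    case False
    then have "0 < q" using q by simp
    then show ?thesis using key[of "1 / q"] by (simp add: field_simps power2_eq_square)
  qed
  then show ?thesis
    using q by (simp add: vnorm_le_mult_iff_scalar_prod_le a_def b_def u_def)
qed

lemma vnorm_mult_ge_if_quadratic_form_ge:
  fixes B :: "real mat"
  assumes B: "B \<in> carrier_mat n n" and y: "y \<in> carrier_vec n"
    and lower: "m * (y \<bullet> y) \<le> y \<bullet> (B *\<^sub>v y)"
  shows "m * vnorm y \<le> vnorm (B *\<^sub>v y)"
proof (cases "vnorm y = 0")
  case False
  have "m * vnorm y * vnorm y \<le> y \<bullet> (B *\<^sub>v y)"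
    using lower by (simp add: vnorm_power2[symmetric] power2_eq_square mult.assoc)
  also have "\<dots> \<le> vnorm (B *\<^sub>v y) * vnorm y"
    using abs_scalar_prod_le_vnorm[OF y mult_mat_vec_carrier[OF B y]]
    by (simp add: abs_le_iff mult.commute)
  finally have "m * vnorm y * vnorm y \<le> vnorm (B *\<^sub>v y) * vnorm y" .
  then show ?thesis using False vnorm_nonneg[of y] by (simp add: mult_le_cancel_right)
qed (simp add: vnorm_nonneg)

lemma vnorm_mult_le_entrywise:
  fixes D :: "real mat"
  assumes D: "D \<in> carrier_mat N N" and \<delta>: "0 \<le> \<delta>"
    and entries: "\<And>i j. i < N \<Longrightarrow> j < N \<Longrightarrow> \<bar>D $$ (i, j)\<bar> \<le> \<delta>"
    and v: "v \<in> carrier_vec N"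
  shows "vnorm (D *\<^sub>v v) \<le> real N * \<delta> * vnorm v"
proof -
  have "((D *\<^sub>v v) $ i)\<^sup>2 \<le> \<delta>\<^sup>2 * real N * (v \<bullet> v)" if i: "i < N" for i
  proof -
    have "\<bar>(D *\<^sub>v v) $ i\<bar> \<le> (\<Sum>j<N. \<bar>D $$ (i, j)\<bar> * \<bar>v $ j\<bar>)"
      using D v i sum_abs[of "\<lambda>j. D $$ (i, j) * v $ j" "{..<N}"]
      by (simp add: mult_mat_vec_def scalar_prod_def atLeast0LessThan abs_mult)
    also have "\<dots> \<le> (\<Sum>j<N. \<delta> * \<bar>v $ j\<bar>)"
      by (intro sum_mono mult_right_mono entries i) auto
    also have "\<dots> \<le> \<delta> * (L2_set (\<lambda>j. v $ j) {..<N} * L2_set (\<lambda>j. 1) {..<N})"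
      using L2_set_mult_ineq[of "\<lambda>j. v $ j" "\<lambda>j. 1" "{..<N}"] \<delta>
      by (simp add: sum_distrib_left[symmetric] mult_left_mono)
    also have "\<dots> = \<delta> * (vnorm v * sqrt (real N))"
      using v by (simp add: vnorm_def L2_set_def)
    finally have "\<bar>(D *\<^sub>v v) $ i\<bar>\<^sup>2 \<le> (\<delta> * (vnorm v * sqrt (real N)))\<^sup>2"
      by (rule power_mono) simp
    then show ?thesis by (simp add: power_mult_distrib vnorm_power2 mult_ac)
  qed
  then have "(\<Sum>i<N. ((D *\<^sub>v v) $ i)\<^sup>2) \<le> (\<Sum>i<N. \<delta>\<^sup>2 * real N * (v \<bullet> v))"
    by (intro sum_mono) simp
  moreover have "(D *\<^sub>v v) \<bullet> (D *\<^sub>v v) = (\<Sum>i<N. ((D *\<^sub>v v) $ i)\<^sup>2)"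
    using D by (simp add: scalar_prod_def atLeast0LessThan power2_eq_square)
  ultimately have "(D *\<^sub>v v) \<bullet> (D *\<^sub>v v) \<le> (\<Sum>i<N. \<delta>\<^sup>2 * real N * (v \<bullet> v))" by simp
  also have "\<dots> = (real N * \<delta>)\<^sup>2 * (v \<bullet> v)" by (simp add: power2_eq_square)
  finally show ?thesis using \<delta> by (simp add: vnorm_le_mult_iff_scalar_prod_le)
qed

section \<open>Gradient descent on a positive definite system\<close>

lemma gd_iter_carrier:
  assumes "M \<in> carrier_mat n n" "b \<in> carrier_vec n"
  shows "gd_iter M b eta k \<in> carrier_vec n"
  by (induction k) (use assms in auto)

lemma gd_iter_error_Suc:
  fixes M :: "real mat"
  assumes M: "M \<in> carrier_mat n n" and b: "b \<in> carrier_vec n"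
    and y: "y \<in> carrier_vec n" and My: "M *\<^sub>v y = b"
  shows "gd_iter M b eta (Suc k) + y = (1\<^sub>m n - eta \<cdot>\<^sub>m M) *\<^sub>v (gd_iter M b eta k + y)"
proof -
  define e where "e = gd_iter M b eta k + y"
  have s: "gd_iter M b eta k \<in> carrier_vec n" by (rule gd_iter_carrier[OF M b])
  have e: "e \<in> carrier_vec n" using s y by (simp add: e_def)
  have "M *\<^sub>v e = M *\<^sub>v gd_iter M b eta k + b"
    using M s y My by (simp add: e_def mult_add_distrib_mat_vec)
  then have "(1\<^sub>m n - eta \<cdot>\<^sub>m M) *\<^sub>v e = e - eta \<cdot>\<^sub>v (M *\<^sub>v gd_iter M b eta k + b)"
    using M e by (simp add: minus_mult_distrib_mat_vec[of _ n n] smult_mat_mult_vec)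
  then show ?thesis
    using s y M b by (auto simp: e_def intro!: eq_vecI)
qed

lemma gd_iter_converges:
  fixes M :: "real mat"
  assumes M: "M \<in> carrier_mat n n" "transpose_mat M = M" and n: "0 < n"
    and b: "b \<in> carrier_vec n" and y: "y \<in> carrier_vec n" and My: "M *\<^sub>v y = b"
    and pos: "0 < lambda_min M"
  shows "vnorm (gd_iter M b (1 / lambda_max M) K + y)
           \<le> (1 - lambda_min M / lambda_max M) ^ K * vnorm y"
proof -
  define m where "m = lambda_min M"
  define L where "L = lambda_max M"
  define q where "q = 1 - m / L"
  define P where "P = 1\<^sub>m n - (1 / L) \<cdot>\<^sub>m M"
  have "m \<le> L" using lambda_min_le_lambda_max[OF M n] by (simp add: m_def L_def)
  then have mL: "0 < m" "0 < L" "0 \<le> q" using pos by (auto simp: m_def q_def field_simps)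
  have P: "P \<in> carrier_mat n n" "transpose_mat P = P"
    using M by (auto simp: P_def symmetric_mat_entry[OF M] intro!: eq_matI)
  have numerical_range: "\<bar>z \<bullet> (P *\<^sub>v z)\<bar> \<le> q * (z \<bullet> z)" if z: "z \<in> carrier_vec n" for z
  proof -
    have "z \<bullet> (P *\<^sub>v z) = z \<bullet> z - (z \<bullet> (M *\<^sub>v z)) / L"
      using M z by (simp add: P_def minus_mult_distrib_mat_vec[of _ n n] smult_mat_mult_vec
          scalar_prod_minus_distrib[of _ n])
    moreover have "m * (z \<bullet> z) \<le> z \<bullet> (M *\<^sub>v z)" "z \<bullet> (M *\<^sub>v z) \<le> L * (z \<bullet> z)"
      using lambda_min_spec(2)[OF M n z] lambda_max_spec(2)[OF M n z] by (auto simp: m_def L_def)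
    moreover have "m * (z \<bullet> z) / L \<le> (z \<bullet> (M *\<^sub>v z)) / L" "(z \<bullet> (M *\<^sub>v z)) / L \<le> z \<bullet> z"
      using calculation(2,3) mL by (auto simp: divide_right_mono pos_divide_le_eq mult.commute)
    moreover have "q * (z \<bullet> z) = z \<bullet> z - m * (z \<bullet> z) / L"
      by (simp add: q_def algebra_simps)
    ultimately show ?thesis by (simp add: abs_le_iff)
  qed
  have contraction: "vnorm (P *\<^sub>v z) \<le> q * vnorm z" if "z \<in> carrier_vec n" for z
    using P mL(3) numerical_range that by (rule vnorm_mult_le_if_abs_quadratic_form_le)
  show ?thesis
  proof (induction K)
    case (Suc K)
    let ?e = "gd_iter M b (1 / L) K + y"
    have "?e \<in> carrier_vec n" using gd_iter_carrier[OF M(1) b] y by simp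
    then have "vnorm (P *\<^sub>v ?e) \<le> q * vnorm ?e" by (rule contraction)
    also have "\<dots> \<le> q * (q ^ K * vnorm y)"
      using Suc.IH mL by (simp add: mult_left_mono L_def m_def q_def)
    finally show ?case
      using gd_iter_error_Suc[OF M(1) b y My] by (simp add: P_def L_def m_def q_def)
  qed (use b y in simp)
qed

lemma one_minus_power_le:
  fixes \<rho> \<epsilon> :: real and K :: nat
  assumes "0 < \<rho>" "\<rho> \<le> 1" "0 < \<epsilon>" "ln (1 / \<epsilon>) \<le> \<rho> * real K"
  shows "(1 - \<rho>) ^ K \<le> \<epsilon>"
proof -
  have "(1 - \<rho>) ^ K \<le> exp (- \<rho>) ^ K"
    using assms exp_ge_add_one_self[of "- \<rho>"] by (intro power_mono) auto
  also have "\<dots> = exp (- (\<rho> * K))" by (simp add: exp_of_nat_mult[symmetric] mult.commute)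
  also have "\<dots> \<le> exp (- ln (1 / \<epsilon>))" using assms by simp
  also have "\<dots> = \<epsilon>" using assms by (simp add: ln_div)
  finally show ?thesis .
qed

lemma gd_iter_error_le:
  fixes M :: "real mat"
  assumes M: "M \<in> carrier_mat n n" "transpose_mat M = M" and n: "0 < n"
    and b: "b \<in> carrier_vec n" and y: "y \<in> carrier_vec n" and My: "M *\<^sub>v y = b"
    and pos: "0 < lambda_min M" and eps: "0 < eps"
    and K: "cond_num M * ln (1 / eps) \<le> real K"
  shows "vnorm (gd_iter M b (1 / lambda_max M) K + y) \<le> eps * vnorm y"
proof -
  define \<rho> where "\<rho> = lambda_min M / lambda_max M"
  have L: "0 < lambda_max M" "lambda_min M \<le> lambda_max M"
    using lambda_min_le_lambda_max[OF M n] pos by auto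
  then have \<rho>: "0 < \<rho>" "\<rho> \<le> 1" using pos by (auto simp: \<rho>_def)
  have "ln (1 / eps) \<le> \<rho> * real K"
    using K mult_left_mono[OF K, of \<rho>] \<rho> pos L by (simp add: \<rho>_def cond_num_def field_simps)
  with \<rho> eps have "(1 - \<rho>) ^ K \<le> eps" by (intro one_minus_power_le)
  then have "(1 - \<rho>) ^ K * vnorm y \<le> eps * vnorm y"
    by (rule mult_right_mono) (rule vnorm_nonneg)
  with gd_iter_converges[OF M n b y My pos, of K] show ?thesis
    unfolding \<rho>_def by linarith
qed

lemma gd_iter_error_le_scaled:
  fixes M :: "real mat"
  assumes M: "M \<in> carrier_mat n n" "transpose_mat M = M" and n: "0 < n"
    and \<mu>: "0 < \<mu>" and lower: "\<And>w. w \<in> carrier_vec n \<Longrightarrow> \<mu> * (w \<bullet> w) \<le> w \<bullet> (M *\<^sub>v w)"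
    and b: "b \<in> carrier_vec n" and y: "y \<in> carrier_vec n" and My: "M *\<^sub>v y = b"
  shows "0 < lambda_max M"
    and "0 < eps \<Longrightarrow> cond_num M * ln (1 / eps) \<le> real K \<Longrightarrow>
      vnorm (gd_iter M b (1 / lambda_max M) K + y) \<le> eps / \<mu> * vnorm b"
proof -
  have pos: "0 < lambda_min M" using lambda_min_ge[OF M n lower] \<mu> by linarith
  then show "0 < lambda_max M" using lambda_min_le_lambda_max[OF M n] by linarith
  assume eps: "0 < eps" and K: "cond_num M * ln (1 / eps) \<le> real K"
  have "\<mu> * vnorm y \<le> vnorm b"
    using vnorm_mult_ge_if_quadratic_form_ge[OF M(1) y lower[OF y]] My by simp
  then have "eps * vnorm y \<le> eps / \<mu> * vnorm b"
    using \<mu> eps by (simp add: field_simps)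
  then show "vnorm (gd_iter M b (1 / lambda_max M) K + y) \<le> eps / \<mu> * vnorm b"
    using gd_iter_error_le[OF M n b y My pos eps K] by linarith
qed

section \<open>Kronecker products\<close>

lemma sum_lessThan_mult_split:
  fixes g :: "nat \<Rightarrow> 'a :: comm_monoid_add"
  shows "(\<Sum>p<N * d. g p) = (\<Sum>i<N. \<Sum>a<d. g (i * d + a))"
proof -
  have "sum g {i * d..<i * d + d} = (\<Sum>a<d. g (i * d + a))" for i
    using sum.shift_bounds_nat_ivl[of g 0 "i * d" d] by (simp add: atLeast0LessThan add.commute)
  then show ?thesis by (simp flip: sum.nat_group)
qed

lemma index_block_less:
  assumes "i < N" "a < (d :: nat)"
  shows "i * d + a < N * d"
proof -
  have "i * d + a < (i + 1) * d" using assms(2) by simp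
  also have "\<dots> \<le> N * d" using assms(1) by (intro mult_right_mono) auto
  finally show ?thesis .
qed

lemma eq_vec_by_blocks:
  assumes "x \<in> carrier_vec (N * d)" "y \<in> carrier_vec (N * d)"
    and "\<And>i a. i < N \<Longrightarrow> a < d \<Longrightarrow> x $ (i * d + a) = y $ (i * d + a)"
  shows "x = y"
proof (rule eq_vecI)
  fix p assume "p < dim_vec y"
  then have p: "p < N * d" using assms(2) by simp
  then have "0 < d" by (cases d) auto
  then have "p div d < N" "p mod d < d" "p = p div d * d + p mod d"
    using p by (auto simp: less_mult_imp_div_less)
  then show "x $ p = y $ p" using assms(3) by metis
qed (use assms in simp)

lemma kron_carrier_mat:
  assumes "G \<in> carrier_mat N N" "S \<in> carrier_mat d d"
  shows "kron G S \<in> carrier_mat (N * d) (N * d)"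
  using assms by (simp add: kron_def)

lemma index_mult_kron:
  fixes G S :: "real mat"
  assumes G: "G \<in> carrier_mat N N" and S: "S \<in> carrier_mat d d"
    and x: "x \<in> carrier_vec (N * d)" and i: "i < N" and a: "a < d"
  shows "(kron G S *\<^sub>v x) $ (i * d + a) = (\<Sum>j<N. \<Sum>b<d. G $$ (i, j) * S $$ (a, b) * x $ (j * d + b))"
proof -
  have "(kron G S *\<^sub>v x) $ (i * d + a) = (\<Sum>p<N * d. kron G S $$ (i * d + a, p) * x $ p)"
    using G S x index_block_less[OF i a]
    by (simp add: kron_def mult_mat_vec_def scalar_prod_def atLeast0LessThan)
  also have "\<dots> = (\<Sum>j<N. \<Sum>b<d. G $$ (i, j) * S $$ (a, b) * x $ (j * d + b))"
    unfolding sum_lessThan_mult_split using G S a index_block_less[OF i a]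
    by (intro sum.cong refl) (simp add: kron_def index_block_less)
  finally show ?thesis .
qed

text \<open>Reading \<open>x \<in> carrier_vec (N * d)\<close> as the row-major vectorisation of an \<open>N \<times> d\<close> matrix,
  \<open>block_vec d x i\<close> is its \<open>i\<close>-th row and \<open>stride_vec N d x a\<close> its \<open>a\<close>-th column.\<close>

definition block_vec :: "nat \<Rightarrow> 'a vec \<Rightarrow> nat \<Rightarrow> 'a vec" where
  "block_vec d x i = vec d (\<lambda>a. x $ (i * d + a))"

definition stride_vec :: "nat \<Rightarrow> nat \<Rightarrow> 'a vec \<Rightarrow> nat \<Rightarrow> 'a vec" where
  "stride_vec N d x a = vec N (\<lambda>i. x $ (i * d + a))"

lemma block_vec_carrier [simp]: "block_vec d x i \<in> carrier_vec d"
  by (simp add: block_vec_def)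

lemma stride_vec_carrier [simp]: "stride_vec N d x a \<in> carrier_vec N"
  by (simp add: stride_vec_def)

lemma scalar_prod_by_blocks:
  assumes "x \<in> carrier_vec (N * d)" "y \<in> carrier_vec (N * d)"
  shows "x \<bullet> y = (\<Sum>i<N. block_vec d x i \<bullet> block_vec d y i)"
  using assms
  by (simp add: scalar_prod_def atLeast0LessThan sum_lessThan_mult_split[of _ N d] block_vec_def)

lemma scalar_prod_by_strides:
  assumes "x \<in> carrier_vec (N * d)" "y \<in> carrier_vec (N * d)"
  shows "x \<bullet> y = (\<Sum>a<d. stride_vec N d x a \<bullet> stride_vec N d y a)"
  using assms
  by (simp add: scalar_prod_def atLeast0LessThan sum_lessThan_mult_split[of _ N d] stride_vec_def
      sum.swap[of _ "{..<N}"])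

lemma sum_delta_mult:
  fixes f :: "nat \<Rightarrow> 'a :: semiring_1"
  assumes "i < n"
  shows "(\<Sum>j<n. (if i = j then 1 else 0) * f j) = f i"
  using assms by (simp add: if_distrib[of "\<lambda>c. c * _"] cong: if_cong)

lemma stride_vec_kron_one_mult:
  fixes G :: "real mat"
  assumes G: "G \<in> carrier_mat N N" and x: "x \<in> carrier_vec (N * d)" and a: "a < d"
  shows "stride_vec N d (kron G (1\<^sub>m d) *\<^sub>v x) a = G *\<^sub>v stride_vec N d x a"
proof (rule eq_vecI)
  fix i assume "i < dim_vec (G *\<^sub>v stride_vec N d x a)"
  then have i: "i < N" using G by simp
  have "(kron G (1\<^sub>m d) *\<^sub>v x) $ (i * d + a) = (\<Sum>j<N. G $$ (i, j) * x $ (j * d + a))"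
    unfolding index_mult_kron[OF G one_carrier_mat x i a]
    using a by (intro sum.cong refl) (simp add: mult.assoc sum_distrib_left[symmetric] sum_delta_mult)
  then show "stride_vec N d (kron G (1\<^sub>m d) *\<^sub>v x) a $ i = (G *\<^sub>v stride_vec N d x a) $ i"
    using G i by (simp add: stride_vec_def mult_mat_vec_def scalar_prod_def atLeast0LessThan)
qed (use G in \<open>simp add: stride_vec_def\<close>)

lemma block_vec_one_kron_mult:
  fixes S :: "real mat"
  assumes S: "S \<in> carrier_mat d d" and x: "x \<in> carrier_vec (N * d)" and i: "i < N"
  shows "block_vec d (kron (1\<^sub>m N) S *\<^sub>v x) i = S *\<^sub>v block_vec d x i"
proof (rule eq_vecI)
  fix a assume "a < dim_vec (S *\<^sub>v block_vec d x i)"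
  then have a: "a < d" using S by simp
  have "(kron (1\<^sub>m N) S *\<^sub>v x) $ (i * d + a) = (\<Sum>b<d. S $$ (a, b) * x $ (i * d + b))"
    unfolding index_mult_kron[OF one_carrier_mat S x i a]
    using i by (simp add: mult.assoc sum_distrib_left[symmetric] sum_delta_mult)
  then show "block_vec d (kron (1\<^sub>m N) S *\<^sub>v x) i $ a = (S *\<^sub>v block_vec d x i) $ a"
    using S a by (simp add: block_vec_def mult_mat_vec_def scalar_prod_def atLeast0LessThan)
qed (use S in \<open>simp add: block_vec_def\<close>)

lemma kron_one_mult_one_kron:
  fixes G S :: "real mat"
  assumes G: "G \<in> carrier_mat N N" and S: "S \<in> carrier_mat d d" and x: "x \<in> carrier_vec (N * d)"
  shows "kron G (1\<^sub>m d) *\<^sub>v (kron (1\<^sub>m N) S *\<^sub>v x) = kron G S *\<^sub>v x"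
proof (rule eq_vec_by_blocks)
  define y where "y = kron (1\<^sub>m N) S *\<^sub>v x"
  have y: "y \<in> carrier_vec (N * d)"
    using kron_carrier_mat[OF one_carrier_mat[of N] S] x by (simp add: y_def)
  show "kron G (1\<^sub>m d) *\<^sub>v y \<in> carrier_vec (N * d)" "kron G S *\<^sub>v x \<in> carrier_vec (N * d)"
    using kron_carrier_mat[OF G one_carrier_mat[of d]] kron_carrier_mat[OF G S] x y by simp_all
  fix i a assume i: "i < N" and a: "a < d"
  have y_index: "y $ (j * d + a) = (\<Sum>b<d. S $$ (a, b) * x $ (j * d + b))" if j: "j < N" for j
    using arg_cong[OF block_vec_one_kron_mult[OF S x j], of "\<lambda>v. v $ a"] S a
    by (simp add: y_def block_vec_def mult_mat_vec_def scalar_prod_def atLeast0LessThan)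
  have "(kron G (1\<^sub>m d) *\<^sub>v y) $ (i * d + a) = (G *\<^sub>v stride_vec N d y a) $ i"
    using arg_cong[OF stride_vec_kron_one_mult[OF G y a], of "\<lambda>v. v $ i"] i
    by (simp add: stride_vec_def)
  also have "\<dots> = (\<Sum>j<N. G $$ (i, j) * (\<Sum>b<d. S $$ (a, b) * x $ (j * d + b)))"
    using G i by (simp add: mult_mat_vec_def scalar_prod_def atLeast0LessThan stride_vec_def y_index)
  also have "\<dots> = (kron G S *\<^sub>v x) $ (i * d + a)"
    by (simp add: index_mult_kron[OF G S x i a] sum_distrib_left mult.assoc)
  finally show "(kron G (1\<^sub>m d) *\<^sub>v y) $ (i * d + a) = (kron G S *\<^sub>v x) $ (i * d + a)" .
qed

lemma kron_minus_left:
  fixes G H S :: "real mat"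
  assumes "G \<in> carrier_mat N N" "H \<in> carrier_mat N N" "S \<in> carrier_mat d d"
  shows "kron (G - H) S = kron G S - kron H S"
  using assms by (intro eq_matI) (auto simp: kron_def less_mult_imp_div_less algebra_simps)

lemma kron_symmetric:
  fixes G S :: "real mat"
  assumes G: "G \<in> carrier_mat N N" "transpose_mat G = G"
    and S: "S \<in> carrier_mat d d" "transpose_mat S = S"
  shows "transpose_mat (kron G S) = kron G S"
proof (rule eq_matI)
  fix p q assume "p < dim_row (kron G S)" "q < dim_col (kron G S)"
  then have pq: "p < N * d" "q < N * d" using G S by (auto simp: kron_def)
  moreover have "0 < d" using pq by (cases d) auto
  ultimately have "p div d < N" "q div d < N" "p mod d < d" "q mod d < d"
    by (auto simp: less_mult_imp_div_less)
  then show "transpose_mat (kron G S) $$ (p, q) = kron G S $$ (p, q)"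
    using pq G S by (simp add: kron_def symmetric_mat_entry[OF G] symmetric_mat_entry[OF S])
qed (use G S in \<open>auto simp: kron_def\<close>)

lemma kron_one_quadratic_form:
  fixes G :: "real mat"
  assumes G: "G \<in> carrier_mat N N" and x: "x \<in> carrier_vec (N * d)"
  shows "x \<bullet> (kron G (1\<^sub>m d) *\<^sub>v x) = (\<Sum>a<d. stride_vec N d x a \<bullet> (G *\<^sub>v stride_vec N d x a))"
proof -
  have "kron G (1\<^sub>m d) *\<^sub>v x \<in> carrier_vec (N * d)"
    using kron_carrier_mat[OF G one_carrier_mat[of d]] x by simp
  then show ?thesis by (simp add: scalar_prod_by_strides[OF x] stride_vec_kron_one_mult[OF G x])
qed

lemma one_kron_quadratic_form:
  fixes S :: "real mat"
  assumes S: "S \<in> carrier_mat d d" and x: "x \<in> carrier_vec (N * d)"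
  shows "x \<bullet> (kron (1\<^sub>m N) S *\<^sub>v x) = (\<Sum>i<N. block_vec d x i \<bullet> (S *\<^sub>v block_vec d x i))"
proof -
  have "kron (1\<^sub>m N) S *\<^sub>v x \<in> carrier_vec (N * d)"
    using kron_carrier_mat[OF one_carrier_mat[of N] S] x by simp
  then show ?thesis by (simp add: scalar_prod_by_blocks[OF x] block_vec_one_kron_mult[OF S x])
qed

lemma kron_one_quadratic_form_ge:
  fixes G :: "real mat"
  assumes G: "G \<in> carrier_mat N N" and x: "x \<in> carrier_vec (N * d)"
    and lower: "\<And>v. v \<in> carrier_vec N \<Longrightarrow> m * (v \<bullet> v) \<le> v \<bullet> (G *\<^sub>v v)"
  shows "m * (x \<bullet> x) \<le> x \<bullet> (kron G (1\<^sub>m d) *\<^sub>v x)"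
  unfolding kron_one_quadratic_form[OF G x] scalar_prod_by_strides[OF x x] sum_distrib_left
  by (intro sum_mono lower) simp

lemma one_kron_psd:
  fixes S :: "real mat"
  assumes S: "S \<in> carrier_mat d d" and x: "x \<in> carrier_vec (N * d)"
    and psd: "\<And>v. v \<in> carrier_vec d \<Longrightarrow> 0 \<le> v \<bullet> (S *\<^sub>v v)"
  shows "0 \<le> x \<bullet> (kron (1\<^sub>m N) S *\<^sub>v x)"
  unfolding one_kron_quadratic_form[OF S x] by (intro sum_nonneg psd) simp

lemma vnorm_kron_one_mult_le:
  fixes D :: "real mat"
  assumes D: "D \<in> carrier_mat N N" and x: "x \<in> carrier_vec (N * d)" and \<theta>: "0 \<le> \<theta>"
    and bound: "\<And>v. v \<in> carrier_vec N \<Longrightarrow> vnorm (D *\<^sub>v v) \<le> \<theta> * vnorm v"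
  shows "vnorm (kron D (1\<^sub>m d) *\<^sub>v x) \<le> \<theta> * vnorm x"
proof -
  have Dx: "kron D (1\<^sub>m d) *\<^sub>v x \<in> carrier_vec (N * d)"
    using kron_carrier_mat[OF D one_carrier_mat[of d]] x by simp
  have "(D *\<^sub>v v) \<bullet> (D *\<^sub>v v) \<le> \<theta>\<^sup>2 * (v \<bullet> v)" if "v \<in> carrier_vec N" for v
    using bound[OF that] \<theta> by (simp add: vnorm_le_mult_iff_scalar_prod_le)
  then have "(kron D (1\<^sub>m d) *\<^sub>v x) \<bullet> (kron D (1\<^sub>m d) *\<^sub>v x) \<le> \<theta>\<^sup>2 * (x \<bullet> x)"
    unfolding scalar_prod_by_strides[OF Dx Dx] scalar_prod_by_strides[OF x x] sum_distrib_left
    using D x by (intro sum_mono) (simp add: stride_vec_kron_one_mult)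
  then show ?thesis
    using \<theta> by (simp add: vnorm_le_mult_iff_scalar_prod_le)
qed

lemma kron_eigenvalue_nonneg:
  fixes G S :: "real mat"
  assumes G: "sym_psd N G" and S: "sym_psd d S" and k: "eigenvalue (kron G S) k"
  shows "0 \<le> k"
proof (rule ccontr)
  assume neg: "\<not> 0 \<le> k"
  let ?G1 = "kron G (1\<^sub>m d)" and ?S1 = "kron (1\<^sub>m N) S"
  have Gc: "G \<in> carrier_mat N N" and Sc: "S \<in> carrier_mat d d" "transpose_mat S = S"
    and S_psd: "\<And>w. w \<in> carrier_vec d \<Longrightarrow> 0 \<le> w \<bullet> (S *\<^sub>v w)"
    using G S by (auto simp: sym_psd_def)
  have S1: "?S1 \<in> carrier_mat (N * d) (N * d)" "transpose_mat ?S1 = ?S1"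
    using kron_carrier_mat[OF one_carrier_mat Sc(1)] kron_symmetric[OF one_carrier_mat _ Sc]
    by (auto simp: transpose_one)
  obtain v where v: "v \<in> carrier_vec (N * d)" "v \<noteq> 0\<^sub>v (N * d)" "kron G S *\<^sub>v v = k \<cdot>\<^sub>v v"
    using k kron_carrier_mat[OF Gc Sc(1)] by (auto simp: eigenvalue_def eigenvector_def)
  \<comment> \<open>With \<open>u = (I \<otimes> S) v\<close> we get \<open>(G \<otimes> I) u = k v\<close>, so \<open>k (u \<bullet> v) = u \<bullet> (G \<otimes> I) u \<ge> 0\<close>
    while \<open>u \<bullet> v = v \<bullet> (I \<otimes> S) v \<ge> 0\<close>; as \<open>k < 0\<close> this forces \<open>u = 0\<close>, hence \<open>k v = 0\<close>.\<close>
  define u where "u = ?S1 *\<^sub>v v"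
  have u: "u \<in> carrier_vec (N * d)" using S1 v by (simp add: u_def)
  have G1u: "?G1 *\<^sub>v u = k \<cdot>\<^sub>v v"
    using kron_one_mult_one_kron[OF Gc Sc(1) v(1)] v(3) by (simp add: u_def)
  have "0 \<le> u \<bullet> (?G1 *\<^sub>v u)"
    using kron_one_quadratic_form_ge[OF Gc u, of 0] G by (simp add: sym_psd_def)
  then have "0 \<le> k * (u \<bullet> v)" using G1u u v by simp
  moreover have "u \<bullet> v = v \<bullet> (?S1 *\<^sub>v v)"
    using u v by (simp add: u_def comm_scalar_prod[of _ "N * d"])
  moreover have "0 \<le> v \<bullet> (?S1 *\<^sub>v v)" by (rule one_kron_psd[OF Sc(1) v(1) S_psd])
  ultimately have "v \<bullet> (?S1 *\<^sub>v v) = 0" using neg by (simp add: zero_le_mult_iff)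
  then have "u = 0\<^sub>v (N * d)"
    unfolding u_def using one_kron_psd[OF Sc(1) _ S_psd]
    by (intro mult_vec_eq_0_if_psd_quadratic_form_eq_0[OF S1 _ v(1)]) auto
  moreover have "?G1 *\<^sub>v 0\<^sub>v (N * d) = 0\<^sub>v (N * d)"
    using kron_carrier_mat[OF Gc one_carrier_mat[of d]] by (intro eq_vecI) auto
  ultimately have "k \<cdot>\<^sub>v v = 0\<^sub>v (N * d)" using G1u by simp
  then have "v \<bullet> (k \<cdot>\<^sub>v v) = 0" using v(1) by simp
  then have "k * (v \<bullet> v) = 0" using v(1) by simp
  then show False using neg v scalar_prod_self_eq_0_iff[OF v(1)] by simp
qed

lemma kron_psd:
  fixes G S :: "real mat"
  assumes G: "sym_psd N G" and S: "sym_psd d S" and x: "x \<in> carrier_vec (N * d)"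
  shows "0 \<le> x \<bullet> (kron G S *\<^sub>v x)"
proof -
  have "kron G S \<in> carrier_mat (N * d) (N * d)" "transpose_mat (kron G S) = kron G S"
    using G S kron_carrier_mat kron_symmetric by (auto simp: sym_psd_def)
  then show ?thesis
    using psd_if_eigenvalues_nonneg kron_eigenvalue_nonneg[OF G S] x by blast
qed

section \<open>Perturbing the precision matrix\<close>

lemma prec_mat_carrier:
  assumes "G \<in> carrier_mat N N" "S \<in> carrier_mat d d"
  shows "prec_mat t G S \<in> carrier_mat (N * d) (N * d)"
  using assms kron_carrier_mat[OF assms] by (simp add: prec_mat_def)

lemma prec_mat_mult_vec:
  assumes "G \<in> carrier_mat N N" "S \<in> carrier_mat d d" "y \<in> carrier_vec (N * d)"
  shows "prec_mat t G S *\<^sub>v y = (alpha_t t)\<^sup>2 \<cdot>\<^sub>v (kron G S *\<^sub>v y) + (sigma_t t)\<^sup>2 \<cdot>\<^sub>v y"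
  using assms kron_carrier_mat[OF assms(1,2)]
  by (simp add: prec_mat_def add_mult_distrib_mat_vec[of _ "N * d" "N * d"] smult_mat_mult_vec)

lemma prec_mat_symmetric:
  assumes "G \<in> carrier_mat N N" "transpose_mat G = G" "sym_psd d S"
  shows "transpose_mat (prec_mat t G S) = prec_mat t G S"
proof -
  have K: "kron G S \<in> carrier_mat (N * d) (N * d)" "transpose_mat (kron G S) = kron G S"
    using assms kron_carrier_mat kron_symmetric by (auto simp: sym_psd_def)
  show ?thesis
    using assms(1,3) K by (auto simp: prec_mat_def sym_psd_def symmetric_mat_entry[OF K] intro!: eq_matI)
qed

lemma prec_mat_quadratic_form_ge:
  assumes "sym_psd N G" "sym_psd d S" "y \<in> carrier_vec (N * d)"
  shows "(sigma_t t)\<^sup>2 * (y \<bullet> y) \<le> y \<bullet> (prec_mat t G S *\<^sub>v y)"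
proof -
  have G: "G \<in> carrier_mat N N" and S: "S \<in> carrier_mat d d" using assms by (auto simp: sym_psd_def)
  have "0 \<le> y \<bullet> (kron G S *\<^sub>v y)"
    using kron_psd[OF assms] .
  moreover have "kron G S *\<^sub>v y \<in> carrier_vec (N * d)" using kron_carrier_mat[OF G S] assms(3) by simp
  ultimately show ?thesis
    using assms(3) by (simp add: prec_mat_mult_vec[OF G S] scalar_prod_add_distrib[of _ "N * d"])
qed

lemma prec_mat_solution:
  assumes "sym_psd N G" "sym_psd d S" "0 < sigma_t t" "b \<in> carrier_vec (N * d)"
  shows "minv (prec_mat t G S) *\<^sub>v b \<in> carrier_vec (N * d)"
    and "prec_mat t G S *\<^sub>v (minv (prec_mat t G S) *\<^sub>v b) = b"
  using minv_mult_vec[OF prec_mat_carrier _ prec_mat_quadratic_form_ge[OF assms(1,2)] assms(4)] assms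
  by (auto simp: sym_psd_def)

lemma vnorm_kron_term_le_prec_mat:
  assumes G: "sym_psd N G" and S: "sym_psd d S" and y: "y \<in> carrier_vec (N * d)"
  shows "vnorm ((alpha_t t)\<^sup>2 \<cdot>\<^sub>v (kron G S *\<^sub>v y)) \<le> vnorm (prec_mat t G S *\<^sub>v y)"
proof -
  define w where "w = (alpha_t t)\<^sup>2 \<cdot>\<^sub>v (kron G S *\<^sub>v y)"
  have Gc: "G \<in> carrier_mat N N" and Sc: "S \<in> carrier_mat d d" using G S by (auto simp: sym_psd_def)
  have w: "w \<in> carrier_vec (N * d)" using kron_carrier_mat[OF Gc Sc] y by (simp add: w_def)
  have "0 \<le> y \<bullet> (kron G S *\<^sub>v y)"
    using kron_psd[OF G S y] .
  then have "0 \<le> y \<bullet> w" using kron_carrier_mat[OF Gc Sc] y by (simp add: w_def)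
  then have "w \<bullet> w \<le> (w + (sigma_t t)\<^sup>2 \<cdot>\<^sub>v y) \<bullet> (w + (sigma_t t)\<^sup>2 \<cdot>\<^sub>v y)"
    unfolding scalar_prod_add_smult_self[OF w y] using scalar_prod_self_nonneg[of y] by simp
  then show ?thesis
    by (simp add: prec_mat_mult_vec[OF Gc Sc y] w_def[symmetric] vnorm_eq_sqrt_scalar_prod)
qed

lemma prec_mat_diff_mult_vec:
  assumes G: "G \<in> carrier_mat N N" and H: "H \<in> carrier_mat N N" and S: "S \<in> carrier_mat d d"
    and y: "y \<in> carrier_vec (N * d)"
  shows "prec_mat t G S *\<^sub>v y - prec_mat t H S *\<^sub>v y
    = kron (G - H) (1\<^sub>m d) *\<^sub>v ((alpha_t t)\<^sup>2 \<cdot>\<^sub>v (kron (1\<^sub>m N) S *\<^sub>v y))"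
proof -
  have D: "G - H \<in> carrier_mat N N" using H by (rule minus_carrier_mat)
  have "kron (G - H) (1\<^sub>m d) *\<^sub>v ((alpha_t t)\<^sup>2 \<cdot>\<^sub>v (kron (1\<^sub>m N) S *\<^sub>v y))
      = (alpha_t t)\<^sup>2 \<cdot>\<^sub>v (kron (G - H) S *\<^sub>v y)"
    using kron_carrier_mat[OF D one_carrier_mat[of d]] kron_carrier_mat[OF one_carrier_mat[of N] S] y
    by (simp add: mult_mat_vec kron_one_mult_one_kron[OF D S y])
  also have "kron (G - H) S *\<^sub>v y = kron G S *\<^sub>v y - kron H S *\<^sub>v y"
    using kron_carrier_mat[OF G S] kron_carrier_mat[OF H S] y
    by (simp add: kron_minus_left[OF G H S] minus_mult_distrib_mat_vec)
  finally show ?thesis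
    using kron_carrier_mat[OF G S] kron_carrier_mat[OF H S] y
    by (auto simp: prec_mat_mult_vec[OF G S y] prec_mat_mult_vec[OF H S y] right_diff_distrib
        intro!: eq_vecI)
qed

lemma vnorm_one_kron_term_le_prec_mat:
  fixes G S :: "real mat"
  assumes G: "G \<in> carrier_mat N N" "transpose_mat G = G"
    and m: "0 < m" and G_lower: "\<And>v. v \<in> carrier_vec N \<Longrightarrow> m * (v \<bullet> v) \<le> v \<bullet> (G *\<^sub>v v)"
    and S: "sym_psd d S" and y: "y \<in> carrier_vec (N * d)"
  shows "m * vnorm ((alpha_t t)\<^sup>2 \<cdot>\<^sub>v (kron (1\<^sub>m N) S *\<^sub>v y)) \<le> vnorm (prec_mat t G S *\<^sub>v y)"
proof -
  define q where "q = (alpha_t t)\<^sup>2 \<cdot>\<^sub>v (kron (1\<^sub>m N) S *\<^sub>v y)"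
  have Sc: "S \<in> carrier_mat d d" using S by (simp add: sym_psd_def)
  have q: "q \<in> carrier_vec (N * d)"
    using kron_carrier_mat[OF one_carrier_mat[of N] Sc] y by (simp add: q_def)
  have "kron G (1\<^sub>m d) *\<^sub>v q = (alpha_t t)\<^sup>2 \<cdot>\<^sub>v (kron G S *\<^sub>v y)"
    using kron_carrier_mat[OF G(1) one_carrier_mat[of d]] kron_carrier_mat[OF one_carrier_mat[of N] Sc] y
    by (simp add: q_def mult_mat_vec kron_one_mult_one_kron[OF G(1) Sc y])
  then have "m * vnorm q \<le> vnorm ((alpha_t t)\<^sup>2 \<cdot>\<^sub>v (kron G S *\<^sub>v y))"
    using vnorm_mult_ge_if_quadratic_form_ge[OF kron_carrier_mat[OF G(1) one_carrier_mat] q]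
      kron_one_quadratic_form_ge[OF G(1) q G_lower] by simp
  also have "\<dots> \<le> vnorm (prec_mat t G S *\<^sub>v y)"
    using vnorm_kron_term_le_prec_mat[OF sym_psd_if_quadratic_form_ge[OF G _ G_lower] S y] m by simp
  finally show ?thesis by (simp add: q_def)
qed

lemma prec_mat_solution_perturbation:
  fixes G H S :: "real mat"
  assumes G: "G \<in> carrier_mat N N" "transpose_mat G = G"
    and m: "0 < m" and G_lower: "\<And>v. v \<in> carrier_vec N \<Longrightarrow> m * (v \<bullet> v) \<le> v \<bullet> (G *\<^sub>v v)"
    and H: "sym_psd N H" and S: "sym_psd d S"
    and \<theta>: "0 \<le> \<theta>" and residual: "\<And>v. v \<in> carrier_vec N \<Longrightarrow> vnorm ((G - H) *\<^sub>v v) \<le> \<theta> * vnorm v"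
    and s: "0 < sigma_t t"
    and y: "y \<in> carrier_vec (N * d)" "prec_mat t G S *\<^sub>v y = b"
    and z: "z \<in> carrier_vec (N * d)" "prec_mat t H S *\<^sub>v z = b"
  shows "vnorm (y - z) \<le> \<theta> / (m * (sigma_t t)\<^sup>2) * vnorm b"
proof -
  have Hc: "H \<in> carrier_mat N N" and Sc: "S \<in> carrier_mat d d" using H S by (auto simp: sym_psd_def)
  define q where "q = (alpha_t t)\<^sup>2 \<cdot>\<^sub>v (kron (1\<^sub>m N) S *\<^sub>v y)"
  have q: "q \<in> carrier_vec (N * d)"
    using kron_carrier_mat[OF one_carrier_mat[of N] Sc] y by (simp add: q_def)
  have q_le: "m * vnorm q \<le> vnorm b"
    using vnorm_one_kron_term_le_prec_mat[OF G m G_lower S y(1), of t] y(2) by (simp add: q_def)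
  have "prec_mat t H S *\<^sub>v (y - z) = prec_mat t H S *\<^sub>v y - prec_mat t G S *\<^sub>v y"
    using mult_minus_distrib_mat_vec[OF prec_mat_carrier[OF Hc Sc] y(1) z(1)] y(2) z(2) by simp
  also have "\<dots> = - (prec_mat t G S *\<^sub>v y - prec_mat t H S *\<^sub>v y)"
    using prec_mat_carrier[OF Hc Sc, of t] prec_mat_carrier[OF G(1) Sc, of t] y(1)
    by (intro eq_vecI) auto
  also have "\<dots> = - (kron (G - H) (1\<^sub>m d) *\<^sub>v q)"
    by (simp add: prec_mat_diff_mult_vec[OF G(1) Hc Sc y(1)] q_def)
  finally have "vnorm (prec_mat t H S *\<^sub>v (y - z)) \<le> \<theta> * vnorm q"
    using vnorm_kron_one_mult_le[OF minus_carrier_mat[OF Hc] q \<theta> residual] by (simp add: vnorm_uminus)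
  moreover have "(sigma_t t)\<^sup>2 * vnorm (y - z) \<le> vnorm (prec_mat t H S *\<^sub>v (y - z))"
    using y z prec_mat_quadratic_form_ge[OF H S, of "y - z" t]
    by (intro vnorm_mult_ge_if_quadratic_form_ge[OF prec_mat_carrier[OF Hc Sc]]) auto
  moreover have "\<theta> * vnorm q \<le> \<theta> * (vnorm b / m)"
    using q_le m \<theta> by (intro mult_left_mono) (simp_all add: field_simps)
  ultimately have "(sigma_t t)\<^sup>2 * vnorm (y - z) \<le> \<theta> * (vnorm b / m)" by linarith
  then show ?thesis using s m by (simp add: field_simps)
qed

lemma gd_iter_perturbed_prec_mat_error:
  fixes G H S :: "real mat"
  assumes N: "0 < N" and d: "0 < d"
    and G: "G \<in> carrier_mat N N" "transpose_mat G = G"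
    and H: "H \<in> carrier_mat N N" "transpose_mat H = H"
    and S: "sym_psd d S"
    and eps: "0 < eps" "eps \<le> 1" "eps < lambda_min G"
    and \<theta>: "0 \<le> \<theta>" "\<theta> \<le> eps * lambda_min G"
    and residual: "\<And>w. w \<in> carrier_vec N \<Longrightarrow> vnorm ((G - H) *\<^sub>v w) \<le> \<theta> * vnorm w"
    and s: "0 < sigma_t t"
    and b: "b \<in> carrier_vec (N * d)"
  shows "0 < lambda_max (prec_mat t H S)"
    and "cond_num (prec_mat t H S) * ln (1 / eps) \<le> real K \<Longrightarrow>
      vnorm (gd_iter (prec_mat t H S) b (1 / lambda_max (prec_mat t H S)) K + minv (prec_mat t G S) *\<^sub>v b)
        \<le> 2 * eps / (sigma_t t)\<^sup>2 * vnorm b"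
proof -
  define M where "M = prec_mat t H S"
  define m where "m = lambda_min G"
  define s where "s = sigma_t t"
  have m: "0 < m" using eps by (simp add: m_def)
  have G_lower: "m * (w \<bullet> w) \<le> w \<bullet> (G *\<^sub>v w)" if "w \<in> carrier_vec N" for w
    using lambda_min_spec(2)[OF G N that] by (simp add: m_def)
  have G_psd: "sym_psd N G" using sym_psd_if_quadratic_form_ge[OF G _ G_lower] m by simp
  have "\<theta> \<le> m" using \<theta>(2) mult_right_mono[OF eps(2) less_imp_le[OF m]] by (simp add: m_def)
  with G(1) G_lower H residual have H_psd: "sym_psd N H" by (rule sym_psd_of_residual_le)
  define y where "y = minv (prec_mat t G S) *\<^sub>v b"
  define z where "z = minv M *\<^sub>v b"
  note y = prec_mat_solution[OF G_psd S s b, folded y_def]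
  note z = prec_mat_solution[OF H_psd S s b, folded M_def, folded z_def]
  have "vnorm (y - z) \<le> \<theta> / (m * s\<^sup>2) * vnorm b"
    using prec_mat_solution_perturbation[OF G m G_lower H_psd S \<theta>(1) residual s y] z
    by (simp add: M_def s_def)
  also have "\<dots> \<le> eps / s\<^sup>2 * vnorm b"
    using \<theta> m s vnorm_nonneg[of b] by (intro mult_right_mono) (auto simp: s_def m_def field_simps)
  finally have yz: "vnorm (y - z) \<le> eps / s\<^sup>2 * vnorm b" .
  have M: "M \<in> carrier_mat (N * d) (N * d)" "transpose_mat M = M"
    using prec_mat_carrier[OF H(1)] prec_mat_symmetric[OF H S] S by (auto simp: M_def sym_psd_def)
  have M_lower: "s\<^sup>2 * (w \<bullet> w) \<le> w \<bullet> (M *\<^sub>v w)" if "w \<in> carrier_vec (N * d)" for w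
    using prec_mat_quadratic_form_ge[OF H_psd S that] by (simp add: M_def s_def)
  have n: "0 < N * d" and s2: "0 < s\<^sup>2" using N d s by (auto simp: s_def)
  show "0 < lambda_max (prec_mat t H S)"
    using M n s2 M_lower b z unfolding M_def by (rule gd_iter_error_le_scaled(1))
  assume K: "cond_num (prec_mat t H S) * ln (1 / eps) \<le> real K"
  let ?x = "gd_iter M b (1 / lambda_max M) K"
  have gd: "vnorm (?x + z) \<le> eps / s\<^sup>2 * vnorm b"
    using M n s2 M_lower b z eps(1) K unfolding M_def by (rule gd_iter_error_le_scaled(2))
  have "vnorm (?x + y) \<le> vnorm (?x + z) + vnorm (y - z)"
    using gd_iter_carrier[OF M(1) b] y z by (intro vnorm_add_le_via) auto
  also have "\<dots> \<le> eps / s\<^sup>2 * vnorm b + eps / s\<^sup>2 * vnorm b" using gd yz by linarith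
  finally show "vnorm (gd_iter (prec_mat t H S) b (1 / lambda_max (prec_mat t H S)) K
      + minv (prec_mat t G S) *\<^sub>v b) \<le> 2 * eps / (sigma_t t)\<^sup>2 * vnorm b"
    by (simp add: M_def y_def s_def)
qed

section \<open>The banded temporal covariance\<close>

lemma Gamma_mat_carrier: "Gamma_mat N e nu l \<in> carrier_mat N N"
  by (simp add: Gamma_mat_def)

lemma Gamma_mat_symmetric:
  assumes "\<forall>i<N. e i \<in> carrier_vec de"
  shows "transpose_mat (Gamma_mat N e nu l) = Gamma_mat N e nu l"
proof (rule eq_matI)
  fix i j assume "i < dim_row (Gamma_mat N e nu l)" "j < dim_col (Gamma_mat N e nu l)"
  then have ij: "i < N" "j < N" by (auto simp: Gamma_mat_def)
  then have "vnorm (e j - e i) = vnorm (e i - e j)"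
    using assms by (intro vnorm_minus_commute[of _ de]) auto
  then show "transpose_mat (Gamma_mat N e nu l) $$ (i, j) = Gamma_mat N e nu l $$ (i, j)"
    using ij by (simp add: Gamma_mat_def)
qed (auto simp: Gamma_mat_def)

lemma Gamma_mat_diag:
  assumes "e i \<in> carrier_vec de" "i < N"
  shows "Gamma_mat N e nu l $$ (i, i) = 1"
proof -
  have "e i - e i = 0\<^sub>v de" using assms(1) by (intro eq_vecI) auto
  then show ?thesis using assms(2) by (simp add: Gamma_mat_def vnorm_def)
qed

lemma Gamma_lambda_min_le_one:
  assumes "0 < N" "\<forall>i<N. e i \<in> carrier_vec de"
  shows "lambda_min (Gamma_mat N e nu l) \<le> 1"
  using lambda_min_le_diag[OF Gamma_mat_carrier Gamma_mat_symmetric[OF assms(2)] assms(1), of nu l]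
    Gamma_mat_diag[of e 0 de N nu l] assms by simp

lemma band_trunc_carrier: "G \<in> carrier_mat N N \<Longrightarrow> band_trunc J G \<in> carrier_mat N N"
  by (simp add: band_trunc_def)

lemma band_trunc_symmetric:
  assumes "G \<in> carrier_mat N N" "transpose_mat G = G"
  shows "transpose_mat (band_trunc J G) = band_trunc J G"
  using assms by (intro eq_matI) (auto simp: band_trunc_def symmetric_mat_entry[OF assms])

lemma band_trunc_residual_index:
  assumes "G \<in> carrier_mat N N" "i < N" "j < N"
  shows "(G - band_trunc J G) $$ (i, j) = (if (if i \<le> j then j - i else i - j) < J then 0 else G $$ (i, j))"
  using assms by (simp add: band_trunc_def)

lemma exp_neg_powr_le_beyond_band:
  fixes c x nu l L :: real and J k :: nat
  assumes c: "0 < c" and x: "c * real k \<le> x" and k: "J \<le> k" and nu: "1 \<le> nu"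
    and l: "0 < l" and L: "0 < L" and J: "2 / c * (l * L) powr (1 / nu) \<le> real J"
  shows "exp (- (x powr nu) / l) \<le> exp (- 2 * L)"
proof -
  define p where "p = (l * L) powr (1 / nu)"
  have p: "0 < p" using l L by (simp add: p_def)
  have "2 * p \<le> c * real J" using J c by (simp add: p_def field_simps)
  also have "\<dots> \<le> c * real k" using k c by simp
  also have "\<dots> \<le> x" by (rule x)
  finally have far: "(2 * p) powr nu \<le> x powr nu" using p nu by (intro powr_mono2) auto
  have "2 * (l * L) \<le> 2 powr nu * (l * L)"
    using powr_mono[OF nu, of 2] l L by (intro mult_right_mono) auto
  also have "\<dots> = (2 * p) powr nu"
    using p l L nu by (simp add: powr_mult p_def powr_powr)
  finally have "2 * (l * L) \<le> x powr nu" using far by linarith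
  then show ?thesis using l by (simp add: field_simps)
qed

lemma vnorm_Gamma_band_residual_le:
  fixes c nu l \<rho> :: real and f :: "nat \<Rightarrow> real"
  assumes c: "0 < c" and f: "\<forall>k. c * real k \<le> f k"
    and dist: "\<forall>i<N. \<forall>j<N. vnorm (e i - e j) = f (if i \<le> j then j - i else i - j)"
    and nu: "1 \<le> nu" and l: "0 < l" and \<rho>: "0 < \<rho>" "\<rho> < 1" and N: "0 < N"
    and J: "2 / c * (l * ln (real N / \<rho>)) powr (1 / nu) \<le> real J"
    and v: "v \<in> carrier_vec N"
  shows "vnorm ((Gamma_mat N e nu l - band_trunc J (Gamma_mat N e nu l)) *\<^sub>v v) \<le> \<rho>\<^sup>2 / real N * vnorm v"
proof -
  define G where "G = Gamma_mat N e nu l"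
  define L where "L = ln (real N / \<rho>)"
  have "1 < real N / \<rho>" using \<rho> N by (simp add: field_simps)
  then have L: "0 < L" "exp (- L) = \<rho> / real N" by (auto simp: L_def exp_minus)
  have \<delta>: "exp (- 2 * L) = (\<rho> / real N)\<^sup>2"
    by (simp add: power2_eq_square L(2)[symmetric] exp_add[symmetric])
  have "\<bar>(G - band_trunc J G) $$ (i, j)\<bar> \<le> (\<rho> / real N)\<^sup>2" if ij: "i < N" "j < N" for i j
  proof (cases "(if i \<le> j then j - i else i - j) < J")
    case False
    define k where "k = (if i \<le> j then j - i else i - j)"
    have "\<bar>(G - band_trunc J G) $$ (i, j)\<bar> = exp (- (f k powr nu) / l)"
      using band_trunc_residual_index[OF _ ij, of G J] False ij dist
      by (simp add: G_def Gamma_mat_carrier Gamma_mat_def k_def)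
    also have "\<dots> \<le> exp (- 2 * L)"
      using False f J
      by (intro exp_neg_powr_le_beyond_band[OF c _ _ nu l L(1), where k = k and J = J])
        (auto simp: k_def L_def)
    finally show ?thesis using \<delta> by simp
  qed (use band_trunc_residual_index[OF _ ij, of G J] in \<open>simp add: G_def Gamma_mat_carrier\<close>)
  then have "vnorm ((G - band_trunc J G) *\<^sub>v v) \<le> real N * (\<rho> / real N)\<^sup>2 * vnorm v"
    using v minus_carrier_mat[OF band_trunc_carrier[OF Gamma_mat_carrier], of G]
    by (intro vnorm_mult_le_entrywise) (auto simp: G_def)
  then show ?thesis using N by (simp add: G_def power2_eq_square)
qed

lemma band_residual_bound_le:
  fixes eps s m :: real
  assumes "0 < N" "0 < s" "s < 1" "0 < eps" "eps \<le> m"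
  shows "(eps * s)\<^sup>2 / real N \<le> eps * m"
proof -
  have "(eps * s)\<^sup>2 / real N \<le> (eps * s)\<^sup>2" using assms by (simp add: divide_le_eq mult_le_cancel_left1)
  also have "\<dots> \<le> eps * eps" using assms by (simp add: power2_eq_square mult_le_one mult_left_le)
  also have "\<dots> \<le> eps * m" using assms by simp
  finally show ?thesis .
qed

lemma sigma_t_pos: "0 < t \<Longrightarrow> 0 < sigma_t t"
  by (simp add: sigma_t_def)

lemma sigma_t_less_one: "sigma_t t < 1"
  by (simp add: sigma_t_def)

lemma gd_iter_banded_score_error:
  fixes c :: real and N d J :: nat and Sig :: "real mat" and mu v :: "real vec"
    and f :: "nat \<Rightarrow> real" and nu l t eps :: real
  assumes c: "0 < c" and N: "0 < N" and d: "0 < d" and Sig: "sym_psd d Sig"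
    and mu: "mu \<in> carrier_vec (d * N)" and v: "v \<in> carrier_vec (d * N)"
    and e: "\<forall>i<N. e i \<in> carrier_vec de" and f: "\<forall>k. c * real k \<le> f k"
    and dist: "\<forall>i<N. \<forall>j<N. vnorm (e i - e j) = f (if i \<le> j then j - i else i - j)"
    and nu: "1 \<le> nu" and l: "0 < l" and t: "0 < t"
    and eps: "0 < eps" "eps < lambda_min (Gamma_mat N e nu l)"
    and J: "2 / c * (l * ln (real N / (eps * sigma_t t))) powr (1 / nu) \<le> real J"
  defines "G \<equiv> Gamma_mat N e nu l"
    and "M \<equiv> prec_mat t (band_trunc J (Gamma_mat N e nu l)) Sig"
    and "b \<equiv> v - alpha_t t \<cdot>\<^sub>v mu"
  shows "\<exists>eta > 0. \<forall>K. cond_num M * ln (1 / eps) \<le> real K \<longrightarrow>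
           vnorm (gd_iter M b eta K - score t G Sig mu v) \<le> 2 * (sigma_t t) powr (-2) * vnorm b * eps"
proof -
  define s where "s = sigma_t t"
  define m where "m = lambda_min G"
  have s: "0 < s" "s < 1" using sigma_t_pos[OF t] sigma_t_less_one by (auto simp: s_def)
  have G: "G \<in> carrier_mat N N" "transpose_mat G = G"
    using Gamma_mat_carrier Gamma_mat_symmetric[OF e] by (auto simp: G_def)
  have eps_m: "eps < m" "m \<le> 1"
    using eps Gamma_lambda_min_le_one[OF N e] by (auto simp: m_def G_def)
  have \<rho>: "0 < eps * s" "eps * s < 1"
    using eps s eps_m mult_strict_mono[of eps 1 s 1] by auto
  have residual: "vnorm ((G - band_trunc J G) *\<^sub>v w) \<le> (eps * s)\<^sup>2 / real N * vnorm w"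
    if "w \<in> carrier_vec N" for w
    using vnorm_Gamma_band_residual_le[OF c f dist nu l \<rho> N _ that] J by (simp add: G_def s_def)
  have \<theta>: "(eps * s)\<^sup>2 / real N \<le> eps * m"
    using band_residual_bound_le[OF N s eps(1)] eps_m by simp
  have b: "b \<in> carrier_vec (N * d)" using mu v by (simp add: b_def mult.commute)
  note banded = gd_iter_perturbed_prec_mat_error[OF N d G band_trunc_carrier[OF G(1)] band_trunc_symmetric[OF G]
      Sig eps(1) _ _ _ _ residual _ b]
  have pos: "0 < lambda_max M"
    and err: "\<And>K. cond_num M * ln (1 / eps) \<le> real K \<Longrightarrow>
      vnorm (gd_iter M b (1 / lambda_max M) K + minv (prec_mat t G Sig) *\<^sub>v b) \<le> 2 * eps / s\<^sup>2 * vnorm b"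
    using banded eps eps_m \<theta> s by (auto simp: m_def G_def M_def s_def)
  have score: "gd_iter M b eta K - score t G Sig mu v = gd_iter M b eta K + minv (prec_mat t G Sig) *\<^sub>v b"
    for eta K unfolding score_def b_def by (intro eq_vecI) auto
  have "s powr (-2) = 1 / s\<^sup>2" using s by (simp add: powr_minus_divide powr_realpow)
  then show ?thesis
    using pos err by (intro exI[of _ "1 / lambda_max M"]) (auto simp: score s_def mult_ac)
qed

theorem corollary1:
  fixes c :: real
  assumes c_pos: "c > 0"
  shows "\<exists>CJ CK :: real. CJ > 0 \<and> CK > 0 \<and>
    (\<forall>N d de :: nat. \<forall>Sig :: real mat. \<forall>mu v :: real vec. \<forall>e :: nat \<Rightarrow> real vec.
     \<forall>f :: nat \<Rightarrow> real. \<forall>r nu l t eps :: real.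
       N > 0 \<longrightarrow> d > 0 \<longrightarrow> sym_psd d Sig \<longrightarrow>
       mu \<in> carrier_vec (d * N) \<longrightarrow> v \<in> carrier_vec (d * N) \<longrightarrow>
       (\<forall>i<N. e i \<in> carrier_vec de \<and> vnorm (e i) = r) \<longrightarrow>
       mono f \<longrightarrow> (\<forall>k>0. f k > 0) \<longrightarrow> (\<forall>k. f k \<ge> c * real k) \<longrightarrow>
       (\<forall>i<N. \<forall>j<N. vnorm (e i - e j) = f (if i \<le> j then j - i else i - j)) \<longrightarrow>
       1 \<le> nu \<longrightarrow> nu \<le> 2 \<longrightarrow> 0 < l \<longrightarrow> l \<le> c powr nu \<longrightarrow>
       0 < t \<longrightarrow>
       0 < eps \<longrightarrow> eps < lambda_min (Gamma_mat N e nu l) \<longrightarrow>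
       (\<forall>J :: nat.
          CJ * (l * ln (real N / (eps * sigma_t t))) powr (1 / nu) \<le> real J \<longrightarrow> J < N \<longrightarrow>
          (let G = Gamma_mat N e nu l;
               M = prec_mat t (band_trunc J G) Sig;
               b = v - alpha_t t \<cdot>\<^sub>v mu
           in \<exists>eta > 0. \<forall>K :: nat.
                CK * cond_num M * ln (1 / eps) \<le> real K \<longrightarrow>
                vnorm (gd_iter M b eta K - score t G Sig mu v)
                  \<le> 2 * (sigma_t t) powr (-2) * vnorm b * eps)))"
  apply (rule exI[of _ "2 / c"], rule exI[of _ 1], intro conjI allI impI)
  subgoal using c_pos by simp
  subgoal by simp
  subgoal for N d de Sig mu v e f r nu l t eps J
    using gd_iter_banded_score_error[OF c_pos, of N d Sig mu v e de f nu l t eps J] by (auto simp: Let_def)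
  done

end
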